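(* Let $(\theta_k)$ and $(\psi_k)$ be uniformly convergent sequences of continuous maps $I\to G$ such that $P^-\theta_k(s)=P^-\psi_k(s)$ for all $s\in I$ and $k$. Let $(x_k)$ be a sequence in $G/\Gamma$ and $t_k\to\infty$. Suppose there is a $Z_G(A)$-invariant probability measure $\mu$ on $G/\Gamma$ such that for every subinterval $J\subset I$ with nonempty interior and every $f\in C_c(G/\Gamma)$, $$\lim_{k\to\infty}\frac{1}{|J|}\int_J f(a_{t_k}\theta_k(s)x_k)\,ds=\int_{G/\Gamma}f\,d\mu.$$ Then for every $f\in C_c(G/\Gamma)$, $\lim_{k\to\infty}\frac{1}{|I|}\int_I f(a_{t_k}\psi_k(s)x_k)\,ds=\int_{G/\Gamma}f\,d\mu$.
   Context: $G=\mathrm{SO}(n,1)$ as $\mathrm{SO}(Q_n)$ with $Q_n=2yz-\sum x_i^2$; $\Gamma$ a lattice; $I$ a compact interval; $a_t=\mathrm{diag}(e^t,1,\dots,1,e^{-t})$, $A=\{a_t\}$, $Z_G(A)$ its centralizer; $P^-=\{g\in G:\overline{\{a_tga_t^{-1}:t>0\}}\text{ compact}\}$. *)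

theory Defs
  imports "HOL-Probability.Probability"
begin

text \<open>Matrices of size (n+1) x (n+1) indexed by a finite linearly ordered type 'i.
  The first index plays the role of y, the last of z, the others are x_1 ... x_{n-1}.\<close>

definition fst_idx :: "('i::{finite,linorder})" where "fst_idx = Min UNIV"
definition lst_idx :: "('i::{finite,linorder})" where "lst_idx = Max UNIV"

definition Qform :: "(real, 'i::{finite,linorder}) vec \<Rightarrow> real" where
  "Qform v = 2 * (v $ fst_idx) * (v $ lst_idx)
             - (\<Sum>i\<in>UNIV - {fst_idx, lst_idx}. (v $ i)^2)"

definition SOQ :: "(((real, 'i::{finite,linorder}) vec, 'i) vec) set" where
  "SOQ = {g. det g = 1 \<and> (\<forall>v. Qform (g *v v) = Qform v)}"

definition amat :: "real \<Rightarrow> ((real, 'i::{finite,linorder}) vec, 'i) vec" where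
  "amat t = (\<chi> i j. if i = j then (if i = fst_idx then exp t
                                    else if i = lst_idx then exp (- t) else 1) else 0)"

definition ZGA :: "(((real, 'i::{finite,linorder}) vec, 'i) vec) set" where
  "ZGA = {g \<in> SOQ. \<forall>t. g ** amat t = amat t ** g}"

definition Pminus :: "(((real, 'i::{finite,linorder}) vec, 'i) vec) set" where
  "Pminus = {g \<in> SOQ. compact (closure {amat t ** g ** matrix_inv (amat t) | t. t > 0})}"

definition Pcoset :: "((real, 'i::{finite,linorder}) vec, 'i) vec \<Rightarrow> (((real, 'i) vec, 'i) vec) set" where
  "Pcoset g = {p ** g | p. p \<in> Pminus}"

definition coset :: "(((real, 'i::finite) vec, 'i) vec) set \<Rightarrow> ((real, 'i) vec, 'i) vec \<Rightarrow> (((real, 'i) vec, 'i) vec) set" where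
  "coset \<Gamma> g = (\<lambda>\<gamma>. g ** \<gamma>) ` \<Gamma>"

definition Xspace :: "(((real, 'i::{finite,linorder}) vec, 'i) vec) set \<Rightarrow> (((real, 'i) vec, 'i) vec) set set" where
  "Xspace \<Gamma> = coset \<Gamma> ` SOQ"

definition act :: "((real, 'i::finite) vec, 'i) vec \<Rightarrow> (((real, 'i) vec, 'i) vec) set \<Rightarrow> (((real, 'i) vec, 'i) vec) set" where
  "act g x = (\<lambda>h. g ** h) ` x"

definition quot_open :: "(((real, 'i::{finite,linorder}) vec, 'i) vec) set \<Rightarrow> (((real, 'i) vec, 'i) vec) set set \<Rightarrow> bool" where
  "quot_open \<Gamma> U \<longleftrightarrow> U \<subseteq> Xspace \<Gamma> \<and>
     openin (top_of_set SOQ) {g \<in> SOQ. coset \<Gamma> g \<in> U}"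

lemma istopology_quot_open: "istopology (quot_open \<Gamma>)"
  unfolding istopology_def quot_open_def
proof (intro conjI allI impI ballI)
  fix S T
  assume "S \<subseteq> Xspace \<Gamma> \<and> openin (top_of_set SOQ) {g \<in> SOQ. coset \<Gamma> g \<in> S}"
     and "T \<subseteq> Xspace \<Gamma> \<and> openin (top_of_set SOQ) {g \<in> SOQ. coset \<Gamma> g \<in> T}"
  then show "S \<inter> T \<subseteq> Xspace \<Gamma>" by blast
  have "{g \<in> SOQ. coset \<Gamma> g \<in> S \<inter> T} =
        {g \<in> SOQ. coset \<Gamma> g \<in> S} \<inter> {g \<in> SOQ. coset \<Gamma> g \<in> T}" by blast
  then show "openin (top_of_set SOQ) {g \<in> SOQ. coset \<Gamma> g \<in> S \<inter> T}"
    using \<open>S \<subseteq> _ \<and> _\<close> \<open>T \<subseteq> _ \<and> _\<close> by (simp add: openin_Int)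
next
  fix K
  assume K: "\<forall>U\<in>K. U \<subseteq> Xspace \<Gamma> \<and> openin (top_of_set SOQ) {g \<in> SOQ. coset \<Gamma> g \<in> U}"
  then show "\<Union>K \<subseteq> Xspace \<Gamma>" by blast
  have "{g \<in> SOQ. coset \<Gamma> g \<in> \<Union>K} = (\<Union>U\<in>K. {g \<in> SOQ. coset \<Gamma> g \<in> U})" by blast
  then show "openin (top_of_set SOQ) {g \<in> SOQ. coset \<Gamma> g \<in> \<Union>K}"
    using K by (auto intro!: openin_Union)
qed

definition quot_top :: "(((real, 'i::{finite,linorder}) vec, 'i) vec) set \<Rightarrow> (((real, 'i) vec, 'i) vec) set topology" where
  "quot_top \<Gamma> = topology (quot_open \<Gamma>)"

definition borel_measure_on :: "'a topology \<Rightarrow> 'a measure \<Rightarrow> bool" where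
  "borel_measure_on T \<nu> \<longleftrightarrow> space \<nu> = topspace T \<and>
      sets \<nu> = sigma_sets (topspace T) {U. openin T U}"

text \<open>Lattice: discrete subgroup Gamma of G such that G/Gamma carries a G-invariant
  Borel probability measure (finite covolume).\<close>
definition lattice :: "(((real, 'i::{finite,linorder}) vec, 'i) vec) set \<Rightarrow> bool" where
  "lattice \<Gamma> \<longleftrightarrow> \<Gamma> \<subseteq> SOQ \<and> mat 1 \<in> \<Gamma> \<and>
     (\<forall>g\<in>\<Gamma>. \<forall>h\<in>\<Gamma>. g ** h \<in> \<Gamma>) \<and> (\<forall>g\<in>\<Gamma>. matrix_inv g \<in> \<Gamma>) \<and>
     Isolated.discrete \<Gamma> \<and>
     (\<exists>\<nu>. prob_space \<nu> \<and> borel_measure_on (quot_top \<Gamma>) \<nu> \<and>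
        (\<forall>g\<in>SOQ. \<forall>B\<in>sets \<nu>. emeasure \<nu> (act g -` B \<inter> space \<nu>) = emeasure \<nu> B))"

definition Cc :: "'a topology \<Rightarrow> ('a \<Rightarrow> real) \<Rightarrow> bool" where
  "Cc T f \<longleftrightarrow> continuous_map T euclideanreal f \<and>
     compactin T (T closure_of {x \<in> topspace T. f x \<noteq> 0})"

end

theory Submission
  imports Defs
begin

(* Write q_k(s) = \<psi>_k(s) \<theta>_k(s)^-1; by hypothesis
   q_k(s) \<in> P^-, i.e. its entries that would be expanded by conjugation with a_t vanish.
   Hence a_t q a_t^-1 converges, as t \<rightarrow> \<infinity> and uniformly in s, to the block-diagonal
   part Z(s) of the uniform limit Q(s) of q_k(s), and Z(s) \<in> Z_G(A).  Since
   a_t \<psi>_k(s) = (a_t q_k(s) a_t^-1) a_t \<theta>_k(s) and compactly supported continuous functions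
   on G/\<Gamma> are uniformly continuous under left translation, the \<psi>-averages are
   asymptotically equal to the averages of f(Z(s) a_{t_k} \<theta>_k(s) x_k).  Freezing Z on
   the pieces of a fine partition of I, each piece is a \<theta>-average of the function
   f \<circ> Z(c), which tends to \<integral> f \<circ> Z(c) d\<mu> = \<integral> f d\<mu> by Z_G(A)-invariance of \<mu>. *)

lemma bounded_bilinear_matrix_mult:
  "bounded_bilinear ((**) :: real^'n^'m \<Rightarrow> real^'k^'n \<Rightarrow> real^'k^'m)"
proof -
  have "bilinear ((**) :: real^'n^'m \<Rightarrow> real^'k^'n \<Rightarrow> real^'k^'m)"
    unfolding bilinear_def
    by (auto intro!: linearI simp: matrix_add_ldistrib matrix_scalar_ac vec_eq_iff
        matrix_matrix_mult_def sum.distrib algebra_simps sum_distrib_left)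
  then show ?thesis using bilinear_conv_bounded_bilinear by blast
qed

lemmas matrix_mult_continuous_on = bounded_bilinear.continuous_on[OF bounded_bilinear_matrix_mult]

section \<open>The group G = SO(Q_n)\<close>

lemma fst_idx_ne_lst_idx:
  assumes "CARD('i::{finite,linorder}) \<ge> 2" shows "fst_idx \<noteq> (lst_idx::'i)"
proof
  assume e: "fst_idx = (lst_idx::'i)"
  have "x = fst_idx" for x :: 'i
  proof -
    have "fst_idx \<le> x" "x \<le> lst_idx" unfolding fst_idx_def lst_idx_def by simp_all
    then show ?thesis using e by simp
  qed
  then have "(UNIV::'i set) = {fst_idx}" by auto
  then have "CARD('i) = card {fst_idx::'i}" by (rule arg_cong)
  then show False using assms by simp
qed

text \<open>The Gram matrix J of Q_n: it swaps the first and last coordinates and negates the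
  middle ones, so that Q_n(v) = v \<bullet> J v.  Elements g of G satisfy g^T J g = J, which
  gives the explicit inverse g^-1 = J g^T J; this inverse is linear in g.\<close>
definition qswap :: "'i::{finite,linorder} \<Rightarrow> 'i" where
  "qswap i = (if i = fst_idx then lst_idx else if i = lst_idx then fst_idx else i)"
definition qsign :: "'i::{finite,linorder} \<Rightarrow> real" where
  "qsign i = (if i = fst_idx \<or> i = lst_idx then 1 else -1)"
definition Qmat :: "((real,'i::{finite,linorder}) vec,'i) vec" where
  "Qmat = (\<chi> i j. if j = qswap i then qsign i else 0)"
definition Qinv :: "((real,'i::{finite,linorder}) vec,'i) vec \<Rightarrow> ((real,'i) vec,'i) vec" where
  "Qinv g = Qmat ** transpose g ** Qmat"

lemma qswap_qswap [simp]: "qswap (qswap i) = i" by (auto simp: qswap_def)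
lemma qsign_qswap [simp]: "qsign (qswap i) = qsign i" by (auto simp: qswap_def qsign_def)
lemma qsign_sq [simp]: "qsign i * qsign i = 1" by (auto simp: qsign_def)

lemma Qmat_Qmat: "Qmat ** Qmat = (mat 1 :: ((real,'i::{finite,linorder}) vec,'i) vec)"
proof -
  have "(Qmat ** Qmat) $ i $ j = (if j = i then 1 else 0)" for i j :: 'i
  proof -
    have "(Qmat ** Qmat) $ i $ j
        = (\<Sum>k\<in>UNIV. (if k = qswap i then qsign i else 0) * (if j = qswap k then qsign k else 0))"
      by (simp add: matrix_matrix_mult_def Qmat_def)
    also have "\<dots> = (\<Sum>k\<in>UNIV. if k = qswap i then qsign i * (if j = qswap k then qsign k else 0) else 0)"
      by (rule sum.cong) auto
    finally show ?thesis by (subst (asm) sum.delta) auto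
  qed
  then show ?thesis by (simp add: vec_eq_iff mat_def)
qed

lemma transpose_Qmat: "transpose (Qmat :: ((real,'i::{finite,linorder}) vec,'i) vec) = Qmat"
proof -
  have "i = qswap j \<longleftrightarrow> j = qswap i" for i j :: 'i by (metis qswap_qswap)
  then show ?thesis by (simp add: vec_eq_iff transpose_def Qmat_def)
qed

lemma Qmat_mulv: "(Qmat *v v) $ i = qsign i * v $ qswap (i::'i::{finite,linorder})"
  by (simp add: matrix_vector_mult_def Qmat_def if_distrib if_distribR cong: if_cong)

lemma Qform_Qmat:
  assumes ne: "fst_idx \<noteq> (lst_idx::'i::{finite,linorder})"
  shows "Qform (v::(real,'i) vec) = inner v (Qmat *v v)"
proof -
  let ?R = "UNIV - {fst_idx, lst_idx} :: 'i set"
  let ?h = "\<lambda>i. v $ i * (qsign i * v $ qswap i)"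
  have U: "(UNIV::'i set) = insert fst_idx (insert lst_idx ?R)" by auto
  have "inner v (Qmat *v v) = sum ?h (insert fst_idx (insert lst_idx ?R))"
    by (simp only: inner_vec_def Qmat_mulv U[symmetric]) simp
  also have "\<dots> = 2 * v $ fst_idx * v $ lst_idx + sum ?h ?R"
    using ne by (simp add: qsign_def qswap_def)
  also have "sum ?h ?R = - (\<Sum>i\<in>?R. (v $ i)^2)"
    by (auto simp: qsign_def qswap_def sum_negf[symmetric] power2_eq_square intro!: sum.cong)
  finally show ?thesis by (simp add: Qform_def)
qed

text \<open>Invariance of Q_n under g is invariance of the bilinear form v \<bullet> J w (polarisation).\<close>
lemma SOQ_preserves_Qmat:
  assumes ne: "fst_idx \<noteq> (lst_idx::'i::{finite,linorder})" and g: "g \<in> SOQ"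
  shows "transpose g ** Qmat ** g = (Qmat :: ((real,'i) vec,'i) vec)"
proof -
  have sym: "inner u (Qmat *v w) = inner w (Qmat *v u)" for u w :: "(real,'i) vec"
    by (metis dot_lmul_matrix inner_commute transpose_Qmat vector_transpose_matrix)
  have polar: "Qform (u + w) = Qform u + Qform w + 2 * inner u (Qmat *v w)" for u w :: "(real,'i) vec"
    using sym[of u w] by (simp add: Qform_Qmat[OF ne] matrix_vector_right_distrib
        inner_add_left inner_add_right)
  have Q: "Qform (g *v v) = Qform v" for v using g by (auto simp: SOQ_def)
  have bilin: "inner v ((transpose g ** Qmat ** g) *v w) = inner v (Qmat *v w)" for v w
  proof -
    have "inner v ((transpose g ** Qmat ** g) *v w) = inner (g *v v) (Qmat *v (g *v w))"
      by (metis dot_lmul_matrix matrix_vector_mul_assoc vector_transpose_matrix)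
    also have "\<dots> = inner v (Qmat *v w)"
      using Q[of "v + w"] Q[of v] Q[of w] by (simp add: matrix_vector_right_distrib polar)
    finally show ?thesis .
  qed
  then have "(transpose g ** Qmat ** g) *v w = Qmat *v w" for w
  proof -
    have "inner d d = 0" if "d = (transpose g ** Qmat ** g) *v w - Qmat *v w" for d
      using that bilin by (simp add: inner_diff_right)
    then show ?thesis by simp
  qed
  then show ?thesis by (simp add: matrix_eq)
qed

lemma Qinv_left:
  assumes "fst_idx \<noteq> (lst_idx::'i::{finite,linorder})" and "g \<in> SOQ"
  shows "Qinv g ** g = (mat 1 :: ((real,'i) vec,'i) vec)"
proof -
  have "Qinv g ** g = Qmat ** (transpose g ** Qmat ** g)" by (simp add: Qinv_def matrix_mul_assoc)
  then show ?thesis using SOQ_preserves_Qmat[OF assms] Qmat_Qmat by simp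
qed

lemma Qinv_right:
  assumes "fst_idx \<noteq> (lst_idx::'i::{finite,linorder})" and "g \<in> SOQ"
  shows "g ** Qinv g = (mat 1 :: ((real,'i) vec,'i) vec)"
  using Qinv_left[OF assms] matrix_left_right_inverse by blast

lemma bounded_linear_Qinv: "bounded_linear (Qinv :: ((real,'i::{finite,linorder}) vec,'i) vec \<Rightarrow> _)"
proof -
  have "linear (transpose :: ((real,'i) vec,'i) vec \<Rightarrow> _)"
    by (rule linearI) (simp_all add: transpose_def vec_eq_iff)
  then have "bounded_linear (transpose :: ((real,'i) vec,'i) vec \<Rightarrow> _)"
    using linear_conv_bounded_linear by blast
  then show ?thesis unfolding Qinv_def[abs_def]
    by (intro bounded_linear_compose[OF bounded_bilinear.bounded_linear_left[OF bounded_bilinear_matrix_mult]]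
        bounded_linear_compose[OF bounded_bilinear.bounded_linear_right[OF bounded_bilinear_matrix_mult]])
qed

lemma Qinv_id: "Qinv (mat 1 :: ((real,'i::{finite,linorder}) vec,'i) vec) = mat 1"
  by (simp add: Qinv_def Qmat_Qmat)

lemma SOQ_mult: "g \<in> SOQ \<Longrightarrow> h \<in> SOQ \<Longrightarrow> g ** h \<in> SOQ"
  by (simp add: SOQ_def det_mul matrix_vector_mul_assoc[symmetric])

lemma id_SOQ: "mat 1 \<in> SOQ"
  by (simp add: SOQ_def)

lemma Qinv_SOQ:
  assumes ne: "fst_idx \<noteq> (lst_idx::'i::{finite,linorder})" and g: "(g::((real,'i) vec,'i) vec) \<in> SOQ"
  shows "Qinv g \<in> SOQ"
proof -
  have "det (Qinv g) * det g = 1" using Qinv_left[OF ne g] by (metis det_I det_mul)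
  moreover have "Qform (Qinv g *v v) = Qform v" for v
  proof -
    have "Qform (g *v (Qinv g *v v)) = Qform (Qinv g *v v)" using g by (simp add: SOQ_def)
    then show ?thesis using Qinv_right[OF ne g] by (simp add: matrix_vector_mul_assoc)
  qed
  ultimately show ?thesis using g by (simp add: SOQ_def)
qed

lemma matrix_inv_eq:
  fixes A B :: "((real,'i::finite) vec,'i) vec"
  assumes "A ** B = mat 1" shows "matrix_inv A = B"
proof -
  have "\<exists>A'. A ** A' = mat 1 \<and> A' ** A = mat 1"
    using assms matrix_left_right_inverse by blast
  then have inv: "matrix_inv A ** A = mat 1"
    unfolding matrix_inv_def by (rule someI2_ex) blast
  have "matrix_inv A = matrix_inv A ** (A ** B)" using assms by simp
  also have "\<dots> = B" using inv by (simp add: matrix_mul_assoc)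
  finally show ?thesis .
qed

lemma continuous_on_det: "continuous_on S (det :: ((real,'i::finite) vec,'i) vec \<Rightarrow> real)"
  unfolding det_def[abs_def]
  by (intro continuous_on_sum continuous_on_mult_left continuous_on_prod
      continuous_on_component continuous_on_id)

lemma continuous_on_Qform: "continuous_on S (Qform :: (real,'i::{finite,linorder}) vec \<Rightarrow> real)"
  unfolding Qform_def[abs_def]
  by (intro continuous_on_diff continuous_on_mult continuous_on_mult_left continuous_on_sum
      continuous_on_power continuous_on_component continuous_on_id)

lemma closed_SOQ: "closed (SOQ :: ((real,'i::{finite,linorder}) vec,'i) vec set)"
proof -
  have eq: "SOQ = {g::((real,'i) vec,'i) vec. det g = 1} \<inter> (\<Inter>v. {g. Qform (g *v v) = Qform v})"
    by (auto simp: SOQ_def)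
  have "continuous_on UNIV (\<lambda>g::((real,'i) vec,'i) vec. g *v v)" for v
    unfolding matrix_vector_mult_def
    by (intro continuous_on_vec_lambda continuous_on_sum continuous_on_mult_right
        continuous_on_component continuous_on_id)
  then have Q: "closed {g::((real,'i) vec,'i) vec. Qform (g *v v) = Qform v}" for v
    by (intro closed_Collect_eq continuous_on_compose2[OF continuous_on_Qform] continuous_on_const) auto
  have "closed {g::((real,'i) vec,'i) vec. det g = 1}"
    by (intro closed_Collect_eq continuous_on_det continuous_on_const)
  then show ?thesis unfolding eq by (rule closed_Int[OF _ closed_INT]) (use Q in blast)
qed

section \<open>The one-parameter group a_t\<close>

text \<open>a_t is diagonal with entries exp (t * lev i), where the level lev is 1 at the first
  index, -1 at the last and 0 elsewhere.\<close>
definition lev :: "'i::{finite,linorder} \<Rightarrow> real" where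
  "lev i = (if i = fst_idx then 1 else if i = lst_idx then -1 else 0)"

lemma lev_gap:
  "lev i > lev j \<Longrightarrow> lev i - lev j \<ge> 1" "lev i < lev j \<Longrightarrow> lev i - lev j \<le> -1"
  by (auto simp: lev_def split: if_splits)

lemma amat_entry:
  "(amat t :: ((real,'i::{finite,linorder}) vec,'i) vec) $ i $ j = (if i = j then exp (t * lev i) else 0)"
  by (simp add: amat_def lev_def)

lemma diagonal_mult_left:
  fixes D M :: "((real,'i::finite) vec,'i) vec"
  assumes "\<And>i k. D $ i $ k = (if i = k then d i else 0)"
  shows "(D ** M) $ i $ j = d i * M $ i $ j"
proof -
  have "(D ** M) $ i $ j = (\<Sum>k\<in>UNIV. if i = k then d i * M $ k $ j else 0)"
    unfolding matrix_matrix_mult_def using assms by (simp only: vec_lambda_beta) (rule sum.cong, auto)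
  then show ?thesis by simp
qed

lemma diagonal_mult_right:
  fixes D M :: "((real,'i::finite) vec,'i) vec"
  assumes "\<And>i k. D $ i $ k = (if i = k then d i else 0)"
  shows "(M ** D) $ i $ j = M $ i $ j * d j"
proof -
  have "(M ** D) $ i $ j = (\<Sum>k\<in>UNIV. if k = j then M $ i $ k * d j else 0)"
    unfolding matrix_matrix_mult_def using assms by (simp only: vec_lambda_beta) (rule sum.cong, auto)
  then show ?thesis by simp
qed

lemma amat_add: "amat s ** amat t = (amat (s + t) :: ((real,'i::{finite,linorder}) vec,'i) vec)"
  by (simp add: vec_eq_iff diagonal_mult_left[OF amat_entry] amat_entry mult_exp_exp algebra_simps)

lemma amat_zero: "amat 0 = (mat 1 :: ((real,'i::{finite,linorder}) vec,'i) vec)"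
  by (simp add: vec_eq_iff amat_entry mat_def)

lemma matrix_inv_amat:
  "matrix_inv (amat t :: ((real,'i::{finite,linorder}) vec,'i) vec) = amat (-t)"
  by (rule matrix_inv_eq) (simp add: amat_add amat_zero)

lemma amat_SOQ:
  assumes ne: "fst_idx \<noteq> (lst_idx::'i::{finite,linorder})"
  shows "(amat t :: ((real,'i) vec,'i) vec) \<in> SOQ"
proof -
  let ?R = "UNIV - {fst_idx, lst_idx} :: 'i set"
  have U: "(UNIV::'i set) = insert fst_idx (insert lst_idx ?R)" by auto
  have mulv: "((amat t :: ((real,'i) vec,'i) vec) *v v) $ i = exp (t * lev i) * v $ i" for v i
    by (simp add: matrix_vector_mult_def amat_entry if_distrib if_distribR cong: if_cong)
  have "det (amat t :: ((real,'i) vec,'i) vec) = (\<Prod>i\<in>insert fst_idx (insert lst_idx ?R). exp (t * lev i))"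
    by (subst det_diagonal) (simp_all add: amat_entry U[symmetric])
  also have "\<dots> = 1" using ne by (simp add: lev_def exp_minus field_simps)
  finally have "det (amat t :: ((real,'i) vec,'i) vec) = 1" .
  moreover have "Qform ((amat t :: ((real,'i) vec,'i) vec) *v v) = Qform v" for v
  proof -
    have "(\<Sum>i\<in>?R. ((amat t *v v) $ i)^2) = (\<Sum>i\<in>?R. (v $ i)^2)"
      by (rule sum.cong) (auto simp: mulv lev_def)
    moreover have "(amat t *v v) $ fst_idx * (amat t *v v) $ lst_idx = v $ fst_idx * v $ lst_idx"
      using ne by (simp add: mulv lev_def exp_minus field_simps)
    ultimately show ?thesis unfolding Qform_def by (simp add: mult.assoc)
  qed
  ultimately show ?thesis by (simp add: SOQ_def)
qed

lemma amat_conj_entry: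
  "(amat t ** p ** amat (-t) :: ((real,'i::{finite,linorder}) vec,'i) vec) $ i $ j
     = exp (t * (lev i - lev j)) * p $ i $ j"
  by (simp add: diagonal_mult_right[OF amat_entry] diagonal_mult_left[OF amat_entry]
      right_diff_distrib exp_diff exp_minus field_simps)

section \<open>The groups P^- and Z_G(A)\<close>

lemma entry_le_norm: "\<bar>(M::((real,'n::finite) vec,'m::finite) vec) $ i $ j\<bar> \<le> norm M"
  by (rule order_trans[OF component_le_norm_cart Finite_Cartesian_Product.norm_nth_le])

lemma norm_le_entry_bound:
  assumes "\<And>i j. \<bar>(M::((real,'n::finite) vec,'m::finite) vec) $ i $ j\<bar> \<le> c"
  shows "norm M \<le> real (CARD('m) * CARD('n)) * c"
proof -
  have "norm M \<le> (\<Sum>i\<in>UNIV. norm (M $ i))" by (simp add: norm_vec_def L2_set_le_sum)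
  also have "\<dots> \<le> (\<Sum>i\<in>UNIV. \<Sum>j\<in>UNIV. \<bar>M $ i $ j\<bar>)" by (rule sum_mono) (rule norm_le_l1_cart)
  also have "\<dots> \<le> (\<Sum>i\<in>(UNIV::'m set). \<Sum>j\<in>(UNIV::'n set). c)" by (intro sum_mono assms)
  finally show ?thesis by simp
qed

text \<open>A matrix is non-expanding if the entries that conjugation by a_t (t > 0) would blow
  up vanish.\<close>
definition nonexpanding :: "((real,'i::{finite,linorder}) vec,'i) vec \<Rightarrow> bool" where
  "nonexpanding p \<longleftrightarrow> (\<forall>i j. lev i > lev j \<longrightarrow> p $ i $ j = 0)"

definition block_part :: "((real,'i::{finite,linorder}) vec,'i) vec \<Rightarrow> ((real,'i) vec,'i) vec" where
  "block_part p = (\<chi> i j. if lev i = lev j then p $ i $ j else 0)"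

text \<open>Elements of P^- are non-expanding: a non-zero entry below the level diagonal would
  make the conjugates a_t p a_-t unbounded.\<close>
lemma Pminus_nonexpanding:
  assumes p: "p \<in> Pminus"
  shows "nonexpanding (p::((real,'i::{finite,linorder}) vec,'i) vec)"
  unfolding nonexpanding_def
proof (intro allI impI)
  fix i j :: 'i assume ij: "lev i > lev j"
  let ?S = "{amat t ** p ** matrix_inv (amat t) | t. t > 0}"
  have "bounded ?S" using p bounded_subset[OF compact_imp_bounded closure_subset]
    by (auto simp: Pminus_def)
  then obtain B where B: "\<And>x. x \<in> ?S \<Longrightarrow> norm x \<le> B" unfolding bounded_iff by blast
  have bound: "exp t * \<bar>p $ i $ j\<bar> \<le> B" if t: "t > 0" for t
  proof -
    have "exp t \<le> exp (t * (lev i - lev j))"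
      using lev_gap(1)[OF ij] t by (simp add: mult_le_cancel_left1)
    then have "exp t * \<bar>p $ i $ j\<bar> \<le> \<bar>(amat t ** p ** amat (-t)) $ i $ j\<bar>"
      by (simp add: amat_conj_entry abs_mult mult_right_mono)
    also have "\<dots> \<le> norm (amat t ** p ** amat (-t))" by (rule entry_le_norm)
    also have "\<dots> \<le> B"
    proof (rule B)
      show "amat t ** p ** amat (-t) \<in> ?S"
        using t by (intro CollectI exI[of _ t]) (simp add: matrix_inv_amat)
    qed
    finally show ?thesis .
  qed
  show "p $ i $ j = 0"
  proof (rule ccontr)
    assume "p $ i $ j \<noteq> 0"
    then have c: "\<bar>p $ i $ j\<bar> > 0" by simp
    have "0 < exp 1 * \<bar>p $ i $ j\<bar>" using c by simp
    then have B0: "B \<ge> 0" using bound[of 1] by linarith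
    define t where "t = B / \<bar>p $ i $ j\<bar> + 1"
    have t: "t > 0" unfolding t_def using B0 c by (simp add: add_nonneg_pos)
    have "(1 + t) * \<bar>p $ i $ j\<bar> \<le> exp t * \<bar>p $ i $ j\<bar>"
      using exp_ge_add_one_self[of t] c by (intro mult_right_mono) auto
    also have "\<dots> \<le> B" by (rule bound[OF t])
    moreover have "(1 + t) * \<bar>p $ i $ j\<bar> = B + 2 * \<bar>p $ i $ j\<bar>"
      unfolding t_def using c by (simp add: field_simps)
    ultimately show False using c by simp
  qed
qed


lemma id_Pminus: "mat 1 \<in> (Pminus :: ((real,'i::{finite,linorder}) vec,'i) vec set)"
proof -
  have "{amat t ** (mat 1 :: ((real,'i) vec,'i) vec) ** matrix_inv (amat t) | t. t > 0} = {mat 1}"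
    by (auto simp: matrix_inv_amat amat_add amat_zero intro!: exI[of _ 1])
  then show ?thesis unfolding Pminus_def using id_SOQ by simp
qed

lemma nonexpanding_limit:
  assumes "P \<longlonglongrightarrow> p" and "\<And>k. nonexpanding (P k)"
  shows "nonexpanding (p :: ((real,'i::{finite,linorder}) vec,'i) vec)"
  unfolding nonexpanding_def
proof (intro allI impI)
  fix i j :: 'i assume "lev i > lev j"
  then have "(\<lambda>k. P k $ i $ j) = (\<lambda>k. 0)" using assms(2) unfolding nonexpanding_def by auto
  moreover have "(\<lambda>k. P k $ i $ j) \<longlonglongrightarrow> p $ i $ j" by (intro tendsto_vec_nth assms(1))
  ultimately show "p $ i $ j = 0" using LIMSEQ_unique tendsto_const by metis
qed

lemma bounded_linear_block_part:
  "bounded_linear (block_part :: ((real,'i::{finite,linorder}) vec,'i) vec \<Rightarrow> _)"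
proof -
  have "linear (block_part :: ((real,'i) vec,'i) vec \<Rightarrow> _)"
    by (rule linearI) (simp_all add: block_part_def vec_eq_iff)
  then show ?thesis using linear_conv_bounded_linear by blast
qed

text \<open>Entries strictly above the level diagonal decay like exp (-t) under conjugation.\<close>
lemma amat_conj_tendsto_block_part:
  assumes "nonexpanding p"
  shows "(\<lambda>n. amat (real n) ** p ** amat (- real n))
           \<longlonglongrightarrow> (block_part p :: ((real,'i::{finite,linorder}) vec,'i) vec)"
proof (intro vec_tendstoI)
  fix i j :: 'i
  consider "lev i < lev j" | "lev i = lev j" | "lev i > lev j" by linarith
  then show "(\<lambda>n. (amat (real n) ** p ** amat (- real n)) $ i $ j) \<longlonglongrightarrow> block_part p $ i $ j"
  proof cases
    case 1
    have pow: "exp (real n * (lev i - lev j)) = exp (lev i - lev j) ^ n" for n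
      by (rule exp_of_nat_mult)
    have "(\<lambda>n. exp (lev i - lev j) ^ n * p $ i $ j) \<longlonglongrightarrow> 0"
      using 1 by (intro tendsto_mult_left_zero LIMSEQ_power_zero) simp
    then show ?thesis using 1 by (simp add: amat_conj_entry block_part_def pow)
  qed (use assms in \<open>simp_all add: amat_conj_entry block_part_def nonexpanding_def\<close>)
qed

text \<open>The block-diagonal part of a non-expanding element of G commutes with A, i.e. lies
  in Z_G(A); it belongs to G as a limit of conjugates of the element.\<close>
lemma block_part_ZGA:
  assumes ne: "fst_idx \<noteq> (lst_idx::'i::{finite,linorder})" and p: "p \<in> SOQ" and "nonexpanding p"
  shows "block_part (p::((real,'i) vec,'i) vec) \<in> ZGA"
proof -
  have "block_part p \<in> SOQ"
  proof (rule closed_sequentially[OF closed_SOQ _ amat_conj_tendsto_block_part[OF assms(3)]])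
    show "amat (real n) ** p ** amat (- real n) \<in> SOQ" for n
      using amat_SOQ[OF ne] p SOQ_mult by blast
  qed
  moreover have "block_part p ** amat t = amat t ** block_part p" for t
    by (simp add: vec_eq_iff diagonal_mult_right[OF amat_entry] diagonal_mult_left[OF amat_entry]
        block_part_def)
  ultimately show ?thesis by (simp add: ZGA_def)
qed

lemma amat_conj_dist_block_part:
  assumes p: "nonexpanding (p::((real,'i::{finite,linorder}) vec,'i) vec)" and q: "nonexpanding q"
    and t: "t \<ge> 0"
  shows "norm (amat t ** p ** amat (-t) - block_part q)
          \<le> real (CARD('i) * CARD('i)) * (norm (p - q) + exp (-t) * norm p)"
proof (rule norm_le_entry_bound)
  fix i j :: 'i
  have diff: "\<bar>p $ i $ j - q $ i $ j\<bar> \<le> norm (p - q)" using entry_le_norm[of "p - q" i j] by simp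
  have pos: "0 \<le> exp (-t) * norm p" by simp
  consider "lev i < lev j" | "lev i = lev j" | "lev i > lev j" by linarith
  then show "\<bar>(amat t ** p ** amat (-t) - block_part q) $ i $ j\<bar> \<le> norm (p - q) + exp (-t) * norm p"
  proof cases
    case 1
    have "exp (t * (lev i - lev j)) \<le> exp (-t)"
      using mult_left_mono[OF lev_gap(2)[OF 1] t] by simp
    then have "\<bar>exp (t * (lev i - lev j)) * p $ i $ j\<bar> \<le> exp (-t) * norm p"
      using entry_le_norm[of p i j] by (simp add: abs_mult mult_mono)
    then show ?thesis using 1 diff by (simp add: amat_conj_entry block_part_def)
  next
    case 2
    then show ?thesis using diff by (simp add: amat_conj_entry block_part_def add_increasing2)
  next
    case 3
    then show ?thesis using p q pos by (simp add: amat_conj_entry block_part_def nonexpanding_def)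
  qed
qed

lemma amat_conj_close_block_part:
  assumes p: "nonexpanding (p::((real,'i::{finite,linorder}) vec,'i) vec)" and q: "nonexpanding q"
    and t: "t \<ge> 0" and pq: "norm (p - q) < r" and qB: "norm q \<le> B" and tr: "exp (-t) < r" and r: "r \<le> 1"
  shows "norm (amat t ** p ** amat (-t) - block_part q) < real (CARD('i) * CARD('i)) * (r * (B + 2))"
proof -
  have "norm p \<le> B + 1" using norm_triangle_ineq[of "p - q" q] pq qB r by simp
  moreover have "r > 0" using tr exp_gt_zero[of "-t"] by linarith
  ultimately have "exp (-t) * norm p \<le> r * (B + 1)" using tr by (intro mult_mono) auto
  then have "norm (p - q) + exp (-t) * norm p < r * (B + 2)" using pq by (simp add: algebra_simps)
  then have "real (CARD('i) * CARD('i)) * (norm (p - q) + exp (-t) * norm p)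
      < real (CARD('i) * CARD('i)) * (r * (B + 2))"
    by (intro mult_strict_left_mono) simp_all
  then show ?thesis using amat_conj_dist_block_part[OF p q t] by linarith
qed

lemma amat_conj_uniform_limit:
  fixes q :: "nat \<Rightarrow> 'a \<Rightarrow> ((real,'i::{finite,linorder}) vec,'i) vec"
  assumes uq: "uniform_limit I q Q sequentially"
    and qP: "\<And>k s. s \<in> I \<Longrightarrow> nonexpanding (q k s)" and QP: "\<And>s. s \<in> I \<Longrightarrow> nonexpanding (Q s)"
    and QB: "bounded (Q ` I)" and t: "filterlim t at_top sequentially"
  shows "uniform_limit I (\<lambda>k s. amat (t k) ** q k s ** amat (- t k)) (\<lambda>s. block_part (Q s)) sequentially"
proof (rule uniform_limitI)
  fix \<epsilon> :: real assume "\<epsilon> > 0"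
  define C where "C = real (CARD('i) * CARD('i))"
  obtain B where B: "B > 0" "\<And>s. s \<in> I \<Longrightarrow> norm (Q s) \<le> B"
    using QB unfolding bounded_pos by blast
  define \<rho> where "\<rho> = min 1 (\<epsilon> / (C * (B + 2)))"
  have D: "C * (B + 2) > 0" using B(1) by (simp add: C_def)
  have "\<rho> \<le> \<epsilon> / (C * (B + 2))" by (simp add: \<rho>_def)
  then have "\<rho> * (C * (B + 2)) \<le> \<epsilon>" using pos_le_divide_eq[OF D] by blast
  then have \<rho>: "\<rho> > 0" "\<rho> \<le> 1" "C * (\<rho> * (B + 2)) \<le> \<epsilon>"
    using D \<open>\<epsilon> > 0\<close> by (auto simp: \<rho>_def algebra_simps)
  have "(\<lambda>k. exp (- t k)) \<longlonglongrightarrow> 0"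
    using filterlim_compose[OF exp_at_bot filterlim_uminus_at_top[THEN iffD1, OF t]] .
  then have "\<forall>\<^sub>F k in sequentially. exp (- t k) < \<rho>"
    using \<rho>(1) by (auto simp: tendsto_iff dist_real_def)
  moreover have "\<forall>\<^sub>F k in sequentially. \<forall>s\<in>I. dist (q k s) (Q s) < \<rho>"
    using uniform_limitD[OF uq \<rho>(1)] .
  moreover have "\<forall>\<^sub>F k in sequentially. t k \<ge> 0"
    using t unfolding filterlim_at_top by blast
  ultimately show "\<forall>\<^sub>F k in sequentially. \<forall>s\<in>I.
      dist (amat (t k) ** q k s ** amat (- t k)) (block_part (Q s)) < \<epsilon>"
  proof eventually_elim
    case (elim k)
    show ?case
    proof
      fix s assume s: "s \<in> I"
      have "norm (q k s - Q s) < \<rho>" using elim(2) s by (simp add: dist_norm)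
      from amat_conj_close_block_part[OF qP[OF s] QP[OF s] elim(3) this B(2)[OF s] elim(1) \<rho>(2)]
      show "dist (amat (t k) ** q k s ** amat (- t k)) (block_part (Q s)) < \<epsilon>"
        using \<rho>(3) by (simp add: dist_norm C_def)
    qed
  qed
qed

section \<open>The homogeneous space G/\<Gamma>\<close>

lemma openin_quot_top:
  "openin (quot_top \<Gamma>) U \<longleftrightarrow>
     U \<subseteq> Xspace \<Gamma> \<and> (\<exists>T. open T \<and> {g \<in> SOQ. coset \<Gamma> g \<in> U} = SOQ \<inter> T)"
  unfolding quot_top_def by (simp add: istopology_quot_open quot_open_def openin_open)

lemma coset_in_Xspace: "g \<in> SOQ \<Longrightarrow> coset \<Gamma> g \<in> Xspace \<Gamma>"
  by (simp add: Xspace_def)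

lemma topspace_quot_top: "topspace (quot_top \<Gamma>) = Xspace \<Gamma>"
proof
  show "topspace (quot_top \<Gamma>) \<subseteq> Xspace \<Gamma>"
    unfolding topspace_def openin_quot_top by blast
  have "openin (quot_top \<Gamma>) (Xspace \<Gamma>)"
    unfolding openin_quot_top using coset_in_Xspace by (auto intro!: exI[of _ UNIV])
  then show "Xspace \<Gamma> \<subseteq> topspace (quot_top \<Gamma>)" by (rule openin_subset)
qed

lemma act_coset: "act g (coset \<Gamma> h) = coset \<Gamma> (g ** h)"
  unfolding act_def coset_def by (auto simp: image_image matrix_mul_assoc)

lemma act_Xspace: "z \<in> SOQ \<Longrightarrow> y \<in> Xspace \<Gamma> \<Longrightarrow> act z y \<in> Xspace \<Gamma>"
  by (auto simp: Xspace_def act_coset SOQ_mult)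

lemma act_Qinv_act:
  assumes "fst_idx \<noteq> (lst_idx::'i::{finite,linorder})" and "z \<in> SOQ" and "y \<in> Xspace \<Gamma>"
  shows "act (Qinv z) (act (z::((real,'i) vec,'i) vec) y) = y"
  using assms Qinv_left[OF assms(1,2)] by (auto simp: Xspace_def act_coset matrix_mul_assoc)

lemma coset_mult_lattice:
  assumes L: "lattice \<Gamma>" and ne: "fst_idx \<noteq> (lst_idx::'i::{finite,linorder})" and \<gamma>: "\<gamma> \<in> \<Gamma>"
  shows "coset \<Gamma> (g ** \<gamma>) = coset \<Gamma> (g::((real,'i) vec,'i) vec)"
proof -
  have \<gamma>S: "\<gamma> \<in> SOQ" using L \<gamma> by (auto simp: lattice_def)
  have "(\<lambda>\<delta>. \<gamma> ** \<delta>) ` \<Gamma> = \<Gamma>"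
  proof
    show "(\<lambda>\<delta>. \<gamma> ** \<delta>) ` \<Gamma> \<subseteq> \<Gamma>" using L \<gamma> by (auto simp: lattice_def)
    show "\<Gamma> \<subseteq> (\<lambda>\<delta>. \<gamma> ** \<delta>) ` \<Gamma>"
    proof
      fix \<delta> assume "\<delta> \<in> \<Gamma>"
      then have "matrix_inv \<gamma> ** \<delta> \<in> \<Gamma>" using L \<gamma> by (auto simp: lattice_def)
      moreover have "\<gamma> ** (matrix_inv \<gamma> ** \<delta>) = \<delta>"
        using Qinv_right[OF ne \<gamma>S] matrix_inv_eq[OF Qinv_right[OF ne \<gamma>S]]
        by (simp add: matrix_mul_assoc)
      ultimately show "\<delta> \<in> (\<lambda>\<delta>. \<gamma> ** \<delta>) ` \<Gamma>" by (metis image_eqI)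
    qed
  qed
  then have "(\<lambda>d. g ** d) ` ((\<lambda>\<delta>. \<gamma> ** \<delta>) ` \<Gamma>) = (\<lambda>d. g ** d) ` \<Gamma>" by simp
  moreover have "(\<lambda>d. g ** d) ` ((\<lambda>\<delta>. \<gamma> ** \<delta>) ` \<Gamma>) = (\<lambda>\<delta>. (g ** \<gamma>) ** \<delta>) ` \<Gamma>"
    by (simp add: image_image matrix_mul_assoc)
  ultimately show ?thesis unfolding coset_def by simp
qed

lemma coset_eqD:
  assumes "lattice \<Gamma>" and "coset \<Gamma> h = coset \<Gamma> k"
  shows "\<exists>\<gamma>\<in>\<Gamma>. k = h ** \<gamma>"
proof -
  have "k \<in> coset \<Gamma> k" using assms(1) unfolding coset_def lattice_def
    by (metis image_eqI matrix_mul_rid)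
  then show ?thesis using assms(2) unfolding coset_def by auto
qed

lemma continuous_on_lift:
  assumes "continuous_map (quot_top \<Gamma>) euclideanreal f"
  shows "continuous_on SOQ (\<lambda>g. f (coset \<Gamma> g))"
  unfolding continuous_on_open_invariant
proof (intro allI impI)
  fix B :: "real set" assume "open B"
  then have "openin (quot_top \<Gamma>) {x \<in> Xspace \<Gamma>. f x \<in> B}"
    using assms unfolding continuous_map topspace_quot_top by auto
  then obtain T where "open T" "{g \<in> SOQ. coset \<Gamma> g \<in> {x \<in> Xspace \<Gamma>. f x \<in> B}} = SOQ \<inter> T"
    unfolding openin_quot_top by blast
  then show "\<exists>A. open A \<and> A \<inter> SOQ = (\<lambda>g. f (coset \<Gamma> g)) -` B \<inter> SOQ"
    using coset_in_Xspace by blast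
qed

lemma continuous_map_act:
  assumes z: "z \<in> SOQ"
  shows "continuous_map (quot_top \<Gamma>) (quot_top \<Gamma>) (act z)"
  unfolding continuous_map topspace_quot_top
proof (intro conjI allI impI)
  show "act z ` Xspace \<Gamma> \<subseteq> Xspace \<Gamma>" using act_Xspace[OF z] by blast
  fix U assume "openin (quot_top \<Gamma>) U"
  then obtain T where T: "open T" "{g \<in> SOQ. coset \<Gamma> g \<in> U} = SOQ \<inter> T"
    unfolding openin_quot_top by blast
  have "{g \<in> SOQ. coset \<Gamma> g \<in> {x \<in> Xspace \<Gamma>. act z x \<in> U}} = SOQ \<inter> (\<lambda>h. z ** h) -` T"
    using T(2) SOQ_mult[OF z] coset_in_Xspace by (auto simp: act_coset)
  moreover have "open ((\<lambda>h. z ** h) -` T)"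
    using matrix_mult_continuous_on[OF continuous_on_const continuous_on_id] T(1) open_vimage by blast
  ultimately show "openin (quot_top \<Gamma>) {x \<in> Xspace \<Gamma>. act z x \<in> U}"
    unfolding openin_quot_top by blast
qed

text \<open>Images of balls in G are open in G/\<Gamma>, since their lifts are unions of right
  translates of the ball by \<Gamma>.\<close>
lemma openin_coset_ball:
  assumes L: "lattice \<Gamma>" and ne: "fst_idx \<noteq> (lst_idx::'i::{finite,linorder})"
  shows "openin (quot_top \<Gamma>) (coset \<Gamma> ` (SOQ \<inter> ball (g::((real,'i) vec,'i) vec) r))"
proof -
  let ?V = "coset \<Gamma> ` (SOQ \<inter> ball g r)"
  have "{h \<in> SOQ. coset \<Gamma> h \<in> ?V} = SOQ \<inter> (\<Union>\<gamma>\<in>\<Gamma>. (\<lambda>h. h ** \<gamma>) -` ball g r)"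
  proof (intro set_eqI iffI)
    fix h assume "h \<in> {h \<in> SOQ. coset \<Gamma> h \<in> ?V}"
    then obtain k where hk: "h \<in> SOQ" "k \<in> SOQ \<inter> ball g r" "coset \<Gamma> h = coset \<Gamma> k" by blast
    then obtain \<gamma> where "\<gamma> \<in> \<Gamma>" "k = h ** \<gamma>" using coset_eqD[OF L] by blast
    then show "h \<in> SOQ \<inter> (\<Union>\<gamma>\<in>\<Gamma>. (\<lambda>h. h ** \<gamma>) -` ball g r)" using hk by blast
  next
    fix h assume "h \<in> SOQ \<inter> (\<Union>\<gamma>\<in>\<Gamma>. (\<lambda>h. h ** \<gamma>) -` ball g r)"
    then obtain \<gamma> where h: "h \<in> SOQ" "\<gamma> \<in> \<Gamma>" "h ** \<gamma> \<in> ball g r" by blast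
    moreover have "h ** \<gamma> \<in> SOQ" using h L SOQ_mult by (auto simp: lattice_def)
    ultimately show "h \<in> {h \<in> SOQ. coset \<Gamma> h \<in> ?V}"
      using coset_mult_lattice[OF L ne h(2)] by (metis (no_types, lifting) IntI image_eqI mem_Collect_eq)
  qed
  moreover have "open (\<Union>\<gamma>\<in>\<Gamma>. (\<lambda>h::((real,'i) vec,'i) vec. h ** \<gamma>) -` ball g r)"
    by (intro open_UN ballI open_vimage[OF open_ball]
        matrix_mult_continuous_on[OF continuous_on_id continuous_on_const])
  ultimately show ?thesis unfolding openin_quot_top Xspace_def by blast
qed

text \<open>Every compact subset of G/\<Gamma> is the image of a compact subset of G: cover it by
  images of unit balls and take the union of finitely many closed unit balls.\<close>
lemma compactin_lift:
  assumes L: "lattice \<Gamma>" and ne: "fst_idx \<noteq> (lst_idx::'i::{finite,linorder})"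
    and K: "compactin (quot_top \<Gamma>) K"
  obtains K' :: "((real,'i::{finite,linorder}) vec,'i) vec set" where "compact K'" "K' \<subseteq> SOQ" "K \<subseteq> coset \<Gamma> ` K'"
proof -
  define V where "V = (\<lambda>g::((real,'i) vec,'i) vec. coset \<Gamma> ` (SOQ \<inter> ball g 1))"
  have "K \<subseteq> \<Union>(V ` SOQ)"
    using K unfolding compactin_def topspace_quot_top Xspace_def V_def by force
  moreover have "\<forall>U\<in>V ` SOQ. openin (quot_top \<Gamma>) U"
    unfolding V_def using openin_coset_ball[OF L ne] by blast
  ultimately obtain \<F> where F: "finite \<F>" "\<F> \<subseteq> V ` SOQ" "K \<subseteq> \<Union>\<F>"
    using K unfolding compactin_def by meson
  then obtain G0 where G0: "G0 \<subseteq> SOQ" "finite G0" "K \<subseteq> \<Union>(V ` G0)"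
    using finite_subset_image[OF F(1) F(2)] by blast
  define K' where "K' = SOQ \<inter> (\<Union>g\<in>G0. cball g 1)"
  have "compact K'" unfolding K'_def
    by (rule closed_Int_compact[OF closed_SOQ compact_UN[OF G0(2) compact_cball]])
  moreover have "K \<subseteq> coset \<Gamma> ` K'"
    using G0(3) unfolding V_def K'_def by (fastforce simp: less_imp_le)
  ultimately show ?thesis using that unfolding K'_def by blast
qed

text \<open>C_c(G/\<Gamma>) is invariant under translation by G: the support of f \<circ> act z is the
  image of the support of f under act z^-1.\<close>
lemma Cc_act:
  assumes f: "Cc (quot_top \<Gamma>) f" and z: "z \<in> SOQ" and ne: "fst_idx \<noteq> (lst_idx::'i::{finite,linorder})"
  shows "Cc (quot_top \<Gamma>) (\<lambda>y. f (act (z::((real,'i) vec,'i) vec) y))"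
proof -
  let ?X = "quot_top \<Gamma>"
  let ?K = "?X closure_of {x \<in> topspace ?X. f x \<noteq> 0}"
  have fc: "continuous_map ?X euclideanreal f" and Kc: "compactin ?X ?K" using f unfolding Cc_def by auto
  have ac: "continuous_map ?X ?X (act z)" by (rule continuous_map_act[OF z])
  let ?C = "{y \<in> topspace ?X. act z y \<in> ?K}"
  have Ccl: "closedin ?X ?C" by (rule closedin_continuous_map_preimage[OF ac closedin_closure_of])
  have "{y \<in> topspace ?X. f (act z y) \<noteq> 0} \<subseteq> ?C"
    using closure_of_subset[of "{x \<in> topspace ?X. f x \<noteq> 0}" ?X] act_Xspace[OF z]
    unfolding topspace_quot_top by blast
  then have cl: "?X closure_of {y \<in> topspace ?X. f (act z y) \<noteq> 0} \<subseteq> ?C"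
    by (rule closure_of_minimal[OF _ Ccl])
  have "?C \<subseteq> act (Qinv z) ` ?K"
    using act_Qinv_act[OF ne z] unfolding topspace_quot_top by (metis (no_types, lifting) image_eqI mem_Collect_eq subsetI)
  moreover have "compactin ?X (act (Qinv z) ` ?K)"
    by (rule image_compactin[OF Kc continuous_map_act[OF Qinv_SOQ[OF ne z]]])
  ultimately have "compactin ?X ?C" using closed_compactin Ccl by blast
  then have "compactin ?X (?X closure_of {y \<in> topspace ?X. f (act z y) \<noteq> 0})"
    using closed_compactin cl closedin_closure_of by blast
  moreover have "continuous_map ?X euclideanreal (\<lambda>y. f (act z y))"
    using continuous_map_compose[OF ac fc] by (simp add: o_def)
  ultimately show ?thesis unfolding Cc_def by blast
qed


section \<open>Uniform continuity of C_c functions under left translation\<close>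

text \<open>A continuous function on G is uniformly continuous under left translations close to
  the identity, uniformly on a compact set (uniform continuity of (u, k) \<mapsto> F (u k) on the
  compact set (G \<inter> cball 1 1) \<times> K).\<close>
lemma continuous_translation_uniform_on_compact:
  fixes F :: "((real,'i::{finite,linorder}) vec,'i) vec \<Rightarrow> real"
  assumes F: "continuous_on SOQ F" and K: "compact K" "K \<subseteq> SOQ" and e: "\<epsilon> > 0"
  obtains \<delta> where "\<delta> > 0" "\<And>u k. u \<in> (SOQ :: ((real,'i) vec,'i) vec set) \<Longrightarrow> k \<in> K \<Longrightarrow> norm (u - mat 1) < \<delta> \<Longrightarrow> \<bar>F (u ** k) - F k\<bar> < \<epsilon>"
proof -
  let ?D = "(SOQ \<inter> cball (mat 1) 1) \<times> K"
  let ?\<Phi> = "\<lambda>p. F (fst p ** snd p)"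
  have "compact ?D"
    using compact_Times[OF closed_Int_compact[OF closed_SOQ compact_cball] K(1)] .
  moreover have "continuous_on ?D ?\<Phi>"
  proof (rule continuous_on_compose2[OF F])
    show "continuous_on ?D (\<lambda>p. fst p ** snd p)"
      by (intro matrix_mult_continuous_on continuous_on_fst continuous_on_snd continuous_on_id)
    show "(\<lambda>p. fst p ** snd p) ` ?D \<subseteq> SOQ" using K(2) by (auto intro!: SOQ_mult)
  qed
  ultimately have "uniformly_continuous_on ?D ?\<Phi>" by (rule compact_uniformly_continuous[rotated])
  then obtain d where d: "d > 0" "\<forall>p\<in>?D. \<forall>p'\<in>?D. dist p' p < d \<longrightarrow> dist (?\<Phi> p') (?\<Phi> p) < \<epsilon>"
    unfolding uniformly_continuous_on_def using e by blast
  show ?thesis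
  proof (rule that[of "min d 1"])
    fix u k :: "((real,'i) vec,'i) vec" assume u: "u \<in> SOQ" and k: "k \<in> K" and uk: "norm (u - mat 1) < min d 1"
    have "(u, k) \<in> ?D" "(mat 1, k) \<in> ?D" using u k uk id_SOQ by (auto simp: dist_norm norm_minus_commute)
    moreover have "dist (u, k) (mat 1, k) < d" using uk by (simp add: dist_Pair_Pair dist_norm)
    ultimately have "dist (?\<Phi> (u, k)) (?\<Phi> (mat 1, k)) < \<epsilon>" using d(2) by blast
    then show "\<bar>F (u ** k) - F k\<bar> < \<epsilon>" by (simp add: dist_real_def)
  qed (use d(1) in simp)
qed

text \<open>One-sided version for f in C_c(G/\<Gamma>), at points of the support of f: these have
  representatives in a fixed compact subset of G.\<close>
lemma Cc_translation_on_support: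
  fixes \<Gamma> :: "((real,'i::{finite,linorder}) vec,'i) vec set"
  assumes L: "lattice \<Gamma>" and ne: "fst_idx \<noteq> (lst_idx::'i)" and f: "Cc (quot_top \<Gamma>) f" and e: "\<epsilon> > 0"
  obtains \<delta> where "\<delta> > 0" "\<And>u w. u \<in> SOQ \<Longrightarrow> w \<in> SOQ \<Longrightarrow> norm (u - mat 1) < \<delta> \<Longrightarrow>
     f (coset \<Gamma> w) \<noteq> 0 \<Longrightarrow> \<bar>f (coset \<Gamma> (u ** w)) - f (coset \<Gamma> w)\<bar> < \<epsilon>"
proof -
  let ?X = "quot_top \<Gamma>"
  let ?S = "{x \<in> topspace ?X. f x \<noteq> 0}"
  obtain K where K: "compact K" "K \<subseteq> SOQ" "?X closure_of ?S \<subseteq> coset \<Gamma> ` K"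
    using compactin_lift[OF L ne] f unfolding Cc_def by blast
  have F: "continuous_on SOQ (\<lambda>g. f (coset \<Gamma> g))"
    using f unfolding Cc_def by (intro continuous_on_lift) blast
  obtain \<delta> where d: "\<delta> > 0" "\<And>u k. u \<in> SOQ \<Longrightarrow> k \<in> K \<Longrightarrow> norm (u - mat 1) < \<delta> \<Longrightarrow>
      \<bar>f (coset \<Gamma> (u ** k)) - f (coset \<Gamma> k)\<bar> < \<epsilon>"
    using continuous_translation_uniform_on_compact[OF F K(1,2) e] by blast
  show ?thesis
  proof (rule that[OF d(1)])
    fix u w :: "((real,'i) vec,'i) vec" assume u: "u \<in> SOQ" and w: "w \<in> SOQ" and uw: "norm (u - mat 1) < \<delta>"
      and fw: "f (coset \<Gamma> w) \<noteq> 0"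
    have "coset \<Gamma> w \<in> ?S" using fw coset_in_Xspace[OF w] topspace_quot_top by blast
    then have "coset \<Gamma> w \<in> coset \<Gamma> ` K" using K(3) closure_of_subset[of ?S ?X] by blast
    then obtain k \<gamma> where k: "k \<in> K" "\<gamma> \<in> \<Gamma>" "k = w ** \<gamma>"
      using coset_eqD[OF L] by (metis imageE)
    have "coset \<Gamma> (u ** k) = coset \<Gamma> (u ** w)" "coset \<Gamma> k = coset \<Gamma> w"
      unfolding k(3) using coset_mult_lattice[OF L ne k(2)] by (simp_all add: matrix_mul_assoc)
    then show "\<bar>f (coset \<Gamma> (u ** w)) - f (coset \<Gamma> w)\<bar> < \<epsilon>" using d(2)[OF u k(1) uw] by simp
  qed
qed

text \<open>Off the support of f this follows from the one-sided version applied to u^-1, using that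
  the inverse depends linearly, hence Lipschitz continuously, on u.\<close>
lemma Cc_translation_near_id:
  fixes \<Gamma> :: "((real,'i::{finite,linorder}) vec,'i) vec set"
  assumes L: "lattice \<Gamma>" and ne: "fst_idx \<noteq> (lst_idx::'i)" and f: "Cc (quot_top \<Gamma>) f" and e: "\<epsilon> > 0"
  obtains \<delta> where "\<delta> > 0" "\<And>u w. u \<in> SOQ \<Longrightarrow> w \<in> SOQ \<Longrightarrow> norm (u - mat 1) < \<delta> \<Longrightarrow>
     \<bar>f (coset \<Gamma> (u ** w)) - f (coset \<Gamma> w)\<bar> < \<epsilon>"
proof -
  obtain \<delta> where d: "\<delta> > 0" "\<And>u w. u \<in> SOQ \<Longrightarrow> w \<in> SOQ \<Longrightarrow> norm (u - mat 1) < \<delta> \<Longrightarrow>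
     f (coset \<Gamma> w) \<noteq> 0 \<Longrightarrow> \<bar>f (coset \<Gamma> (u ** w)) - f (coset \<Gamma> w)\<bar> < \<epsilon>"
    using Cc_translation_on_support[OF L ne f e] by blast
  obtain M where M: "M > 0" "\<And>x::((real,'i) vec,'i) vec. norm (Qinv x) \<le> norm x * M"
    using bounded_linear.pos_bounded[OF bounded_linear_Qinv] by blast
  show ?thesis
  proof (rule that[of "\<delta> / (M + 1)"])
    show "\<delta> / (M + 1) > 0" using d(1) M(1) by simp
    fix u w :: "((real,'i) vec,'i) vec" assume u: "u \<in> SOQ" and w: "w \<in> SOQ" and uw: "norm (u - mat 1) < \<delta> / (M + 1)"
    have "\<delta> / (M + 1) \<le> \<delta>" using d(1) M(1) by (simp add: field_simps)
    then have u1: "norm (u - mat 1) < \<delta>" using uw by linarith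
    have "norm (Qinv u - mat 1) = norm (Qinv (u - mat 1))"
      by (simp add: linear_diff[OF bounded_linear.linear[OF bounded_linear_Qinv]] Qinv_id)
    also have "\<dots> \<le> norm (u - mat 1) * M" by (rule M(2))
    also have "\<dots> < \<delta> / (M + 1) * M" by (rule mult_strict_right_mono[OF uw M(1)])
    also have "\<dots> \<le> \<delta>" using d(1) M(1) by (simp add: field_simps)
    finally have u2: "norm (Qinv u - mat 1) < \<delta>" .
    have cancel: "Qinv u ** (u ** w) = w"
      by (metis Qinv_left[OF ne u] matrix_mul_assoc matrix_mul_lid)
    consider "f (coset \<Gamma> w) \<noteq> 0" | "f (coset \<Gamma> (u ** w)) \<noteq> 0"
      | "f (coset \<Gamma> w) = 0" "f (coset \<Gamma> (u ** w)) = 0" by blast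
    then show "\<bar>f (coset \<Gamma> (u ** w)) - f (coset \<Gamma> w)\<bar> < \<epsilon>"
    proof cases
      case 2
      then show ?thesis using d(2)[OF Qinv_SOQ[OF ne u] SOQ_mult[OF u w] u2] cancel by (simp add: abs_minus_commute)
    qed (use d(2)[OF u w u1] e in simp_all)
  qed
qed

lemma Cc_translation_uniform:
  fixes \<Gamma> :: "((real,'i::{finite,linorder}) vec,'i) vec set"
  assumes L: "lattice \<Gamma>" and ne: "fst_idx \<noteq> (lst_idx::'i)" and f: "Cc (quot_top \<Gamma>) f" and e: "\<epsilon> > 0"
  obtains \<delta> where "\<delta> > 0" "\<And>c z w. c \<in> SOQ \<Longrightarrow> z \<in> SOQ \<Longrightarrow> w \<in> SOQ \<Longrightarrow> norm z \<le> R \<Longrightarrow>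
     norm (c - z) < \<delta> \<Longrightarrow> \<bar>f (coset \<Gamma> (c ** w)) - f (coset \<Gamma> (z ** w))\<bar> < \<epsilon>"
proof -
  obtain \<delta> where d: "\<delta> > 0" "\<And>u w. u \<in> SOQ \<Longrightarrow> w \<in> SOQ \<Longrightarrow> norm (u - mat 1) < \<delta> \<Longrightarrow>
     \<bar>f (coset \<Gamma> (u ** w)) - f (coset \<Gamma> w)\<bar> < \<epsilon>"
    using Cc_translation_near_id[OF L ne f e] by blast
  obtain M where M: "M > 0" "\<And>x::((real,'i) vec,'i) vec. norm (Qinv x) \<le> norm x * M"
    using bounded_linear.pos_bounded[OF bounded_linear_Qinv] by blast
  obtain P where P: "P > 0" "\<And>x y :: ((real,'i) vec,'i) vec. norm ((x :: ((real,'i) vec,'i) vec) ** y) \<le> norm x * norm y * P"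
    using bounded_bilinear.pos_bounded[OF bounded_bilinear_matrix_mult] by blast
  define C where "C = P * (max R 0 * M + 1)"
  have C: "C > 0" unfolding C_def using P(1) M(1) by (simp add: add_nonneg_pos)
  show ?thesis
  proof (rule that[of "\<delta> / C"])
    show "\<delta> / C > 0" using d(1) C by simp
    fix c z w :: "((real,'i) vec,'i) vec" assume c: "c \<in> SOQ" and z: "z \<in> SOQ" and w: "w \<in> SOQ" and zR: "norm z \<le> R"
      and cz: "norm (c - z) < \<delta> / C"
    have "(c - z) ** Qinv z = c ** Qinv z - mat 1"
      using Qinv_right[OF ne z] by (simp add: bounded_bilinear.diff_left[OF bounded_bilinear_matrix_mult])
    then have "c ** Qinv z - mat 1 = (c - z) ** Qinv z" by simp
    then have "norm (c ** Qinv z - mat 1) \<le> norm (c - z) * (norm (Qinv z) * P)"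
      using P(2)[of "c - z" "Qinv z"] by (simp add: mult.assoc)
    also have "\<dots> \<le> norm (c - z) * C"
    proof (rule mult_left_mono)
      have "norm (Qinv z) \<le> max R 0 * M"
        using order_trans[OF M(2)[of z] mult_right_mono[of "norm z" "max R 0" M]] zR M(1) by simp
      then have "norm (Qinv z) * P \<le> max R 0 * M * P" using P(1) by (simp add: mult_right_mono)
      also have "\<dots> \<le> C" unfolding C_def using P(1) by (simp add: algebra_simps)
      finally show "norm (Qinv z) * P \<le> C" .
    qed simp
    also have "\<dots> < \<delta>" using cz C by (simp add: field_simps)
    finally have "\<bar>f (coset \<Gamma> ((c ** Qinv z) ** (z ** w))) - f (coset \<Gamma> (z ** w))\<bar> < \<epsilon>"
      using d(2) SOQ_mult[OF c Qinv_SOQ[OF ne z]] SOQ_mult[OF z w] by blast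
    moreover have "(c ** Qinv z) ** (z ** w) = c ** w"
      using Qinv_left[OF ne z] by (simp add: matrix_mul_assoc) (simp add: matrix_mul_assoc[symmetric])
    ultimately show "\<bar>f (coset \<Gamma> (c ** w)) - f (coset \<Gamma> (z ** w))\<bar> < \<epsilon>" by simp
  qed
qed


section \<open>Invariance of integrals\<close>

lemma openin_in_sets:
  assumes "borel_measure_on (quot_top \<Gamma>) \<mu>" and "openin (quot_top \<Gamma>) U"
  shows "U \<in> sets \<mu>"
  using assms unfolding borel_measure_on_def by (auto intro: sigma_sets.Basic)

lemma borel_measurable_continuous_map:
  assumes B: "borel_measure_on (quot_top \<Gamma>) \<mu>" and f: "continuous_map (quot_top \<Gamma>) euclideanreal f"
  shows "f \<in> borel_measurable \<mu>"
proof (rule borel_measurableI)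
  fix S :: "real set" assume "open S"
  then have "openin (quot_top \<Gamma>) {x \<in> topspace (quot_top \<Gamma>). f x \<in> S}"
    using f unfolding continuous_map by auto
  moreover have "f -` S \<inter> space \<mu> = {x \<in> topspace (quot_top \<Gamma>). f x \<in> S}"
    using B unfolding borel_measure_on_def by auto
  ultimately show "f -` S \<inter> space \<mu> \<in> sets \<mu>" using openin_in_sets[OF B] by simp
qed

lemma act_measurable:
  assumes B: "borel_measure_on (quot_top \<Gamma>) \<mu>" and z: "z \<in> SOQ"
  shows "act z \<in> measurable \<mu> \<mu>"
proof (rule measurable_sigma_sets)
  have ac: "continuous_map (quot_top \<Gamma>) (quot_top \<Gamma>) (act z)" by (rule continuous_map_act[OF z])
  show "sets \<mu> = sigma_sets (topspace (quot_top \<Gamma>)) {U. openin (quot_top \<Gamma>) U}"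
    using B unfolding borel_measure_on_def by simp
  show "{U. openin (quot_top \<Gamma>) U} \<subseteq> Pow (topspace (quot_top \<Gamma>))"
    using openin_subset by blast
  show "act z \<in> space \<mu> \<rightarrow> topspace (quot_top \<Gamma>)"
    using B ac unfolding borel_measure_on_def continuous_map by auto
  fix U assume "U \<in> {U. openin (quot_top \<Gamma>) U}"
  then have "openin (quot_top \<Gamma>) {x \<in> topspace (quot_top \<Gamma>). act z x \<in> U}"
    using ac unfolding continuous_map by auto
  moreover have "act z -` U \<inter> space \<mu> = {x \<in> topspace (quot_top \<Gamma>). act z x \<in> U}"
    using B unfolding borel_measure_on_def by auto
  ultimately show "act z -` U \<inter> space \<mu> \<in> sets \<mu>" using openin_in_sets[OF B] by simp
qed

text \<open>If \<mu> is invariant under z, then integrals of continuous functions are invariant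
  under translation by z (the push-forward of \<mu> under act z is \<mu>).\<close>
lemma integral_act_invariant:
  assumes B: "borel_measure_on (quot_top \<Gamma>) \<mu>" and z: "z \<in> SOQ"
    and inv: "\<And>B. B \<in> sets \<mu> \<Longrightarrow> emeasure \<mu> (act z -` B \<inter> space \<mu>) = emeasure \<mu> B"
    and f: "continuous_map (quot_top \<Gamma>) euclideanreal f"
  shows "integral\<^sup>L \<mu> (\<lambda>y. f (act z y)) = integral\<^sup>L \<mu> f"
proof -
  have m: "act z \<in> measurable \<mu> \<mu>" by (rule act_measurable[OF B z])
  have "distr \<mu> \<mu> (act z) = \<mu>"
    by (rule measure_eqI) (simp_all add: emeasure_distr[OF m] inv)
  moreover have "integral\<^sup>L (distr \<mu> \<mu> (act z)) f = integral\<^sup>L \<mu> (\<lambda>y. f (act z y))"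
    by (rule integral_distr[OF m borel_measurable_continuous_map[OF B f]])
  ultimately show ?thesis by simp
qed

section \<open>Averages over an interval\<close>

lemma uniform_partition:
  fixes a b :: real and N :: nat
  assumes ab: "a \<le> b" and N: "N > 0" and c: "c = (\<lambda>j. a + real j * ((b - a) / N))"
  shows "c (Suc j) - c j = (b - a) / N" and "c N = b" and "j \<le> N \<Longrightarrow> a \<le> c j \<and> c j \<le> b"
proof -
  show "c (Suc j) - c j = (b - a) / N" using N by (simp add: c field_simps)
  show "c N = b" using N by (simp add: c)
  assume "j \<le> N"
  then have "real j * ((b - a) / N) \<le> real N * ((b - a) / N)" using ab by (intro mult_right_mono) auto
  then show "a \<le> c j \<and> c j \<le> b" using ab N by (simp add: c)
qed

lemma integral_uniform_split:
  fixes g :: "real \<Rightarrow> real" and N :: nat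
  assumes g: "continuous_on {a..b} g" and ab: "a \<le> b" and N: "N > 0"
  defines "c \<equiv> \<lambda>j. a + real j * ((b - a) / N)"
  shows "integral {a..b} g = (\<Sum>j<N. integral {c j..c (Suc j)} g)"
proof -
  note part = uniform_partition[OF ab N meta_eq_to_obj_eq[OF c_def]]
  have "n \<le> N \<Longrightarrow> integral {a..c n} g = (\<Sum>j<n. integral {c j..c (Suc j)} g)" for n
  proof (induction n)
    case (Suc n)
    have "{a..c (Suc n)} \<subseteq> {a..b}" using part(3)[OF Suc.prems] by auto
    then have int: "g integrable_on {a..c (Suc n)}"
      by (rule integrable_on_subinterval[OF integrable_continuous_interval[OF g]])
    have "(b - a) / N \<ge> 0" using ab by simp
    then have "c n \<le> c (Suc n)" using part(1)[of n] by linarith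
    moreover have "a \<le> c n" using part(3)[of n] Suc.prems by simp
    ultimately have "integral {a..c n} g + integral {c n..c (Suc n)} g = integral {a..c (Suc n)} g"
      using int by (intro Henstock_Kurzweil_Integration.integral_combine)
    then show ?case using Suc by simp
  qed (simp add: c_def)
  then show ?thesis using part(2) by (metis order_refl)
qed

lemma integral_diff_bound:
  fixes g h :: "real \<Rightarrow> real"
  assumes "continuous_on {u..v} g" "continuous_on {u..v} h" "u \<le> v"
    and "\<And>s. s \<in> {u..v} \<Longrightarrow> \<bar>g s - h s\<bar> \<le> e"
  shows "\<bar>integral {u..v} g - integral {u..v} h\<bar> \<le> e * (v - u)"
proof -
  have "integral {u..v} g - integral {u..v} h = integral {u..v} (\<lambda>s. g s - h s)"
    by (intro integral_diff[symmetric] integrable_continuous_interval assms(1,2))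
  also have "\<bar>\<dots>\<bar> \<le> integral {u..v} (\<lambda>s. e)"
    using integral_norm_bound_integral[of "\<lambda>s. g s - h s" "{u..v}" "\<lambda>s. e"] assms
    by (simp add: integrable_continuous_interval continuous_on_diff)
  also have "\<dots> = e * (v - u)" using assms(3) by simp
  finally show ?thesis .
qed

lemma average_from_uniform_pieces:
  fixes g :: "real \<Rightarrow> real" and N :: nat
  assumes g: "continuous_on {a..b} g" and ab: "a < b" and N: "N > 0"
  defines "c \<equiv> \<lambda>j. a + real j * ((b - a) / N)"
  assumes piece: "\<And>j. j < N \<Longrightarrow>
      \<bar>integral {c j..c (Suc j)} g - (b - a) / N * L\<bar> \<le> e * ((b - a) / N)"
  shows "\<bar>(1 / (b - a)) * integral {a..b} g - L\<bar> \<le> e"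
proof -
  have "\<bar>integral {a..b} g - (b - a) * L\<bar> = \<bar>\<Sum>j<N. integral {c j..c (Suc j)} g - (b - a) / N * L\<bar>"
    using integral_uniform_split[OF g less_imp_le[OF ab] N] N
    by (simp add: c_def sum_subtractf)
  also have "\<dots> \<le> (\<Sum>j<N. e * ((b - a) / N))"
    by (rule order_trans[OF sum_abs sum_mono]) (rule piece, simp)
  also have "\<dots> = e * (b - a)" using N by simp
  finally show ?thesis using ab by (simp add: field_simps abs_divide[symmetric] divide_le_eq)
qed

lemma integral_near_frozen:
  fixes g h :: "real \<Rightarrow> real"
  assumes g: "continuous_on {u..v} g" and h: "continuous_on {u..v} h" and uv: "u < v"
    and close: "\<And>s. s \<in> {u..v} \<Longrightarrow> \<bar>g s - h s\<bar> \<le> \<eta>"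
    and avg: "\<bar>(1 / (v - u)) * integral {u..v} h - L\<bar> < \<eta>"
  shows "\<bar>integral {u..v} g - (v - u) * L\<bar> \<le> 2 * \<eta> * (v - u)"
proof -
  have "\<bar>integral {u..v} g - integral {u..v} h\<bar> \<le> \<eta> * (v - u)"
    using integral_diff_bound[OF g h _ close] uv by simp
  moreover have "integral {u..v} h - (v - u) * L = (v - u) * ((1 / (v - u)) * integral {u..v} h - L)"
    using uv by (simp add: field_simps)
  then have "\<bar>integral {u..v} h - (v - u) * L\<bar> < \<eta> * (v - u)"
    using avg uv by (simp add: abs_mult mult.commute[of \<eta>])
  ultimately show ?thesis by linarith
qed

text \<open>Suppose the integrands h k u s depend on a parameter u which
  can be frozen: for fixed u, the averages of h k u over every subinterval tend to L,
  and h k s s is uniformly close to h k u s for u near s.  Then the averages of the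
  diagonal h k s s over the whole interval tend to L as well.  (Partition [a,b] into
  pieces so short that freezing u at the left endpoint costs little.)\<close>
lemma average_limit_by_freezing:
  fixes h :: "nat \<Rightarrow> real \<Rightarrow> real \<Rightarrow> real"
  assumes ab: "a < b"
    and cont: "\<And>k u. u \<in> {a..b} \<Longrightarrow> continuous_on {a..b} (h k u)"
    and cont_diag: "\<And>k. continuous_on {a..b} (\<lambda>s. h k s s)"
    and frozen: "\<And>u c d. u \<in> {a..b} \<Longrightarrow> a \<le> c \<Longrightarrow> c < d \<Longrightarrow> d \<le> b \<Longrightarrow>
       (\<lambda>k. (1 / (d - c)) * integral {c..d} (h k u)) \<longlonglongrightarrow> L"
    and equi: "\<And>\<eta>. \<eta> > 0 \<Longrightarrow> \<exists>\<delta>>0. \<forall>k u s. u \<in> {a..b} \<longrightarrow> s \<in> {a..b} \<longrightarrow>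
       \<bar>s - u\<bar> < \<delta> \<longrightarrow> \<bar>h k s s - h k u s\<bar> \<le> \<eta>"
  shows "(\<lambda>k. (1 / (b - a)) * integral {a..b} (\<lambda>s. h k s s)) \<longlonglongrightarrow> L"
proof (rule tendstoI)
  fix \<epsilon> :: real assume "\<epsilon> > 0"
  define \<eta> where "\<eta> = \<epsilon> / 3"
  have \<eta>: "\<eta> > 0" using \<open>\<epsilon> > 0\<close> by (simp add: \<eta>_def)
  obtain \<delta> where \<delta>: "\<delta> > 0" "\<And>k u s. u \<in> {a..b} \<Longrightarrow> s \<in> {a..b} \<Longrightarrow> \<bar>s - u\<bar> < \<delta> \<Longrightarrow>
      \<bar>h k s s - h k u s\<bar> \<le> \<eta>"
    using equi[OF \<eta>] by blast
  define N :: nat where "N = nat \<lceil>(b - a) / \<delta>\<rceil> + 1"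
  define l where "l = (b - a) / N"
  define c where "c = (\<lambda>j. a + real j * ((b - a) / N))"
  have N: "N > 0" unfolding N_def by simp
  have "(b - a) / \<delta> < real N" unfolding N_def by linarith
  then have l: "l > 0" "l < \<delta>"
    using ab N \<delta>(1) by (simp_all add: l_def field_simps)
  note part = uniform_partition[OF less_imp_le[OF ab] N c_def]
  have len: "c (Suc j) - c j = l" for j unfolding l_def by (rule part(1))
  have piece_sub: "a \<le> c j" "c j < c (Suc j)" "c (Suc j) \<le> b" if "j < N" for j
    using part(3)[of j] part(3)[of "Suc j"] len[of j] l(1) that by auto
  have "\<forall>\<^sub>F k in sequentially. dist ((1 / l) * integral {c j..c (Suc j)} (h k (c j))) L < \<eta>"
    if j: "j < N" for j
  proof -
    have "c j \<in> {a..b}" using piece_sub[OF j] by auto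
    then have "(\<lambda>k. (1 / (c (Suc j) - c j)) * integral {c j..c (Suc j)} (h k (c j))) \<longlonglongrightarrow> L"
      using piece_sub[OF j] by (intro frozen) auto
    then show ?thesis using \<eta> unfolding len[of j] tendsto_iff by blast
  qed
  then have "\<forall>\<^sub>F k in sequentially. \<forall>j\<in>{..<N}.
      dist ((1 / l) * integral {c j..c (Suc j)} (h k (c j))) L < \<eta>"
    by (intro eventually_ball_finite) auto
  then show "\<forall>\<^sub>F k in sequentially. dist ((1 / (b - a)) * integral {a..b} (\<lambda>s. h k s s)) L < \<epsilon>"
  proof eventually_elim
    case (elim k)
    have "\<bar>integral {c j..c (Suc j)} (\<lambda>s. h k s s) - l * L\<bar> \<le> (2 * \<eta>) * l" if j: "j < N" for j
    proof -
      have sub: "{c j..c (Suc j)} \<subseteq> {a..b}" "c j \<in> {a..b}" using piece_sub[OF j] by auto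
      have close: "\<bar>h k s s - h k (c j) s\<bar> \<le> \<eta>" if s: "s \<in> {c j..c (Suc j)}" for s
        using \<delta>(2)[of "c j" s k] sub s len[of j] l by auto
      have "\<bar>(1 / (c (Suc j) - c j)) * integral {c j..c (Suc j)} (h k (c j)) - L\<bar> < \<eta>"
        using elim j by (simp add: len dist_real_def)
      from integral_near_frozen[OF continuous_on_subset[OF cont_diag[of k] sub(1)]
          continuous_on_subset[OF cont[of "c j" k, OF sub(2)] sub(1)] piece_sub(2)[OF j] close this]
      show ?thesis by (simp add: len)
    qed
    then have "\<bar>(1 / (b - a)) * integral {a..b} (\<lambda>s. h k s s) - L\<bar> \<le> 2 * \<eta>"
      using average_from_uniform_pieces[OF cont_diag ab N] unfolding c_def l_def by simp
    then show ?case using \<eta> by (simp add: dist_real_def \<eta>_def)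
  qed
qed


lemma continuous_on_lift_comp:
  assumes "continuous_map (quot_top \<Gamma>) euclideanreal f" and "continuous_on S \<phi>" and "\<phi> ` S \<subseteq> SOQ"
  shows "continuous_on S (\<lambda>s. f (coset \<Gamma> (\<phi> s)))"
  by (rule continuous_on_compose2[OF continuous_on_lift[OF assms(1)] assms(2,3)])

lemma Pcoset_ratio_Pminus:
  assumes ne: "fst_idx \<noteq> (lst_idx::'i::{finite,linorder})" and \<theta>: "\<theta> \<in> SOQ"
    and eq: "Pcoset \<theta> = Pcoset (\<psi> :: ((real,'i) vec,'i) vec)"
  shows "\<psi> ** Qinv \<theta> \<in> Pminus"
proof -
  have "\<psi> \<in> Pcoset \<theta>" using eq id_Pminus unfolding Pcoset_def by force
  then obtain p where p: "p \<in> Pminus" "\<psi> = p ** \<theta>" unfolding Pcoset_def by blast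
  have "\<psi> ** Qinv \<theta> = p" using Qinv_right[OF ne \<theta>] by (simp add: p(2) matrix_mul_assoc[symmetric])
  then show ?thesis using p(1) by simp
qed

lemma uniform_limit_ratio:
  fixes \<theta> \<psi> :: "nat \<Rightarrow> 'a::topological_space \<Rightarrow> ((real,'i::{finite,linorder}) vec,'i) vec"
  assumes S: "compact S"
    and u\<theta>: "uniform_limit S \<theta> \<Theta> sequentially" and u\<psi>: "uniform_limit S \<psi> \<Psi> sequentially"
    and c\<theta>: "\<And>k. continuous_on S (\<theta> k)" and c\<psi>: "\<And>k. continuous_on S (\<psi> k)"
  shows "continuous_on S (\<lambda>s. \<Psi> s ** Qinv (\<Theta> s))"
    and "uniform_limit S (\<lambda>k s. \<psi> k s ** Qinv (\<theta> k s)) (\<lambda>s. \<Psi> s ** Qinv (\<Theta> s)) sequentially"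
proof -
  have \<Theta>: "continuous_on S (\<lambda>s. Qinv (\<Theta> s))"
    by (intro continuous_on_compose2[OF linear_continuous_on[OF bounded_linear_Qinv]]
        uniform_limit_theorem[OF _ u\<theta>]) (auto simp: c\<theta>)
  have \<Psi>: "continuous_on S \<Psi>" by (rule uniform_limit_theorem[OF _ u\<psi>]) (auto simp: c\<psi>)
  show "continuous_on S (\<lambda>s. \<Psi> s ** Qinv (\<Theta> s))" by (rule matrix_mult_continuous_on[OF \<Psi> \<Theta>])
  show "uniform_limit S (\<lambda>k s. \<psi> k s ** Qinv (\<theta> k s)) (\<lambda>s. \<Psi> s ** Qinv (\<Theta> s)) sequentially"
    by (rule bounded_bilinear.bounded_uniform_limit[OF bounded_bilinear_matrix_mult u\<psi>
          bounded_linear.uniform_limit[OF bounded_linear_Qinv u\<theta>]])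
       (intro compact_imp_bounded compact_continuous_image S \<Theta> \<Psi>)+
qed

lemma conjugated_ratio_limit:
  fixes \<theta> \<psi> :: "nat \<Rightarrow> 'a::topological_space \<Rightarrow> ((real,'i::{finite,linorder}) vec,'i) vec"
  assumes ne: "fst_idx \<noteq> (lst_idx::'i)" and S: "compact S"
    and \<theta>: "\<And>k. continuous_on S (\<theta> k) \<and> \<theta> k ` S \<subseteq> SOQ" and \<psi>: "\<And>k. continuous_on S (\<psi> k) \<and> \<psi> k ` S \<subseteq> SOQ"
    and u\<theta>: "uniformly_convergent_on S \<theta>" and u\<psi>: "uniformly_convergent_on S \<psi>"
    and P: "\<And>k s. s \<in> S \<Longrightarrow> Pcoset (\<theta> k s) = Pcoset (\<psi> k s)"
    and t: "filterlim t at_top sequentially"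
  obtains Z where "continuous_on S Z" "\<And>s. s \<in> S \<Longrightarrow> Z s \<in> ZGA"
    "uniform_limit S (\<lambda>k s. amat (t k) ** (\<psi> k s ** Qinv (\<theta> k s)) ** amat (- t k)) Z sequentially"
proof -
  obtain \<Theta> \<Psi> where lim: "uniform_limit S \<theta> \<Theta> sequentially" "uniform_limit S \<psi> \<Psi> sequentially"
    using u\<theta> u\<psi> unfolding uniformly_convergent_on_def by blast
  define q where "q = (\<lambda>k s. \<psi> k s ** Qinv (\<theta> k s))"
  define Q where "Q = (\<lambda>s. \<Psi> s ** Qinv (\<Theta> s))"
  have Qc: "continuous_on S Q" and uq: "uniform_limit S q Q sequentially"
    unfolding q_def Q_def using uniform_limit_ratio[OF S lim] \<theta> \<psi> by auto
  have qS: "q k s \<in> SOQ" and qP: "nonexpanding (q k s)" if s: "s \<in> S" for k s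
  proof -
    have "\<theta> k s \<in> SOQ" "\<psi> k s \<in> SOQ" using s \<theta> \<psi> by blast+
    then show "q k s \<in> SOQ" "nonexpanding (q k s)"
      unfolding q_def using SOQ_mult Qinv_SOQ[OF ne] Pminus_nonexpanding[OF Pcoset_ratio_Pminus[OF ne _ P[OF s]]]
      by blast+
  qed
  have QS: "Q s \<in> SOQ" and QP: "nonexpanding (Q s)" if "s \<in> S" for s
    using closed_sequentially[OF closed_SOQ _ tendsto_uniform_limitI[OF uq that]]
      nonexpanding_limit[OF tendsto_uniform_limitI[OF uq that]] qS qP that by blast+
  show ?thesis
  proof (rule that[of "\<lambda>s. block_part (Q s)"])
    show "continuous_on S (\<lambda>s. block_part (Q s))"
      by (rule continuous_on_compose2[OF linear_continuous_on[OF bounded_linear_block_part] Qc subset_UNIV])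
    show "block_part (Q s) \<in> ZGA" if "s \<in> S" for s by (rule block_part_ZGA[OF ne QS[OF that] QP[OF that]])
    show "uniform_limit S (\<lambda>k s. amat (t k) ** (\<psi> k s ** Qinv (\<theta> k s)) ** amat (- t k))
        (\<lambda>s. block_part (Q s)) sequentially"
      using amat_conj_uniform_limit[OF uq qP QP compact_imp_bounded[OF compact_continuous_image[OF Qc S]] t]
      unfolding q_def .
  qed
qed

text \<open>Replacing the conjugated ratios C_k(s) by their uniform limit Z(s) changes the
  integrals of f (C_k(s) w \<Gamma>) only by o(1), by uniform continuity of f.\<close>
lemma integral_translation_replacement:
  fixes \<Gamma> :: "((real,'i::{finite,linorder}) vec,'i) vec set" and a b :: real
  assumes L: "lattice \<Gamma>" and ne: "fst_idx \<noteq> (lst_idx::'i)" and f: "Cc (quot_top \<Gamma>) f"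
    and uC: "uniform_limit {a..b} C Z sequentially"
    and Z: "continuous_on {a..b} Z" "\<And>s. s \<in> {a..b} \<Longrightarrow> Z s \<in> SOQ"
    and C: "\<And>k. continuous_on {a..b} (C k)" "\<And>k s. s \<in> {a..b} \<Longrightarrow> C k s \<in> SOQ"
    and W: "\<And>k. continuous_on {a..b} (W k)" "\<And>k s. s \<in> {a..b} \<Longrightarrow> W k s \<in> SOQ"
  shows "(\<lambda>k. integral {a..b} (\<lambda>s. f (coset \<Gamma> (C k s ** W k s)))
            - integral {a..b} (\<lambda>s. f (coset \<Gamma> (Z s ** W k s)))) \<longlonglongrightarrow> 0"
proof -
  have fc: "continuous_map (quot_top \<Gamma>) euclideanreal f" using f unfolding Cc_def by blast
  have CW: "continuous_on {a..b} (\<lambda>s. f (coset \<Gamma> (C k s ** W k s)))" for k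
    using C W by (intro continuous_on_lift_comp[OF fc] matrix_mult_continuous_on) (auto intro!: SOQ_mult)
  have ZW: "continuous_on {a..b} (\<lambda>s. f (coset \<Gamma> (Z s ** W k s)))" for k
    using Z W by (intro continuous_on_lift_comp[OF fc] matrix_mult_continuous_on) (auto intro!: SOQ_mult)
  obtain R where R: "\<And>s. s \<in> {a..b} \<Longrightarrow> norm (Z s) \<le> R"
    using compact_imp_bounded[OF compact_continuous_image[OF Z(1) compact_Icc]] unfolding bounded_iff by blast
  have "uniform_limit {a..b}
      (\<lambda>k s. f (coset \<Gamma> (C k s ** W k s)) - f (coset \<Gamma> (Z s ** W k s))) (\<lambda>s. 0) sequentially"
  proof (rule uniform_limitI)
    fix \<epsilon> :: real assume "\<epsilon> > 0"
    then obtain \<delta> where \<delta>: "\<delta> > 0" "\<And>c z w. c \<in> SOQ \<Longrightarrow> z \<in> SOQ \<Longrightarrow> w \<in> SOQ \<Longrightarrow> norm z \<le> R \<Longrightarrow>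
        norm (c - z) < \<delta> \<Longrightarrow> \<bar>f (coset \<Gamma> (c ** w)) - f (coset \<Gamma> (z ** w))\<bar> < \<epsilon>"
      using Cc_translation_uniform[OF L ne f] by metis
    show "\<forall>\<^sub>F k in sequentially. \<forall>s\<in>{a..b}.
        dist (f (coset \<Gamma> (C k s ** W k s)) - f (coset \<Gamma> (Z s ** W k s))) 0 < \<epsilon>"
      using uniform_limitD[OF uC \<delta>(1)]
      by eventually_elim (use \<delta>(2) R C(2) W(2) Z(2) in \<open>fastforce simp: dist_norm\<close>)
  qed
  then obtain I J where I: "\<And>k. ((\<lambda>s. f (coset \<Gamma> (C k s ** W k s)) - f (coset \<Gamma> (Z s ** W k s)))
      has_integral I k) {a..b}" and J: "((\<lambda>s. 0) has_integral J) {a..b}" and lim: "I \<longlonglongrightarrow> J"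
    by (rule uniform_limit_integral) (auto intro: continuous_on_diff CW ZW)
  have "I = (\<lambda>k. integral {a..b} (\<lambda>s. f (coset \<Gamma> (C k s ** W k s)))
      - integral {a..b} (\<lambda>s. f (coset \<Gamma> (Z s ** W k s))))"
    using integral_unique[OF I]
      integral_diff[OF integrable_continuous_interval[OF CW] integrable_continuous_interval[OF ZW]] by auto
  moreover have "J = 0" using J by (simp add: has_integral_0_eq)
  ultimately show ?thesis using lim by simp
qed


text \<open>Freezing the Z_G(A)-twist on short subintervals: if the averages of g (W_k(s) \<Gamma>)
  over subintervals tend to \<integral> g d\<mu> for all g \<in> C_c, then so do the averages of
  f (Z(s) W_k(s) \<Gamma>), because each frozen twist Z(u) preserves \<mu>.\<close>
lemma twisted_average_limit:
  fixes \<Gamma> :: "((real,'i::{finite,linorder}) vec,'i) vec set" and a b :: real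
  assumes L: "lattice \<Gamma>" and ne: "fst_idx \<noteq> (lst_idx::'i)" and f: "Cc (quot_top \<Gamma>) f" and ab: "a < b"
    and Z: "continuous_on {a..b} Z" "\<And>s. s \<in> {a..b} \<Longrightarrow> Z s \<in> ZGA"
    and W: "\<And>k. continuous_on {a..b} (W k)" "\<And>k s. s \<in> {a..b} \<Longrightarrow> W k s \<in> SOQ"
    and B: "borel_measure_on (quot_top \<Gamma>) \<mu>"
    and inv: "\<And>z B. z \<in> ZGA \<Longrightarrow> B \<in> sets \<mu> \<Longrightarrow> emeasure \<mu> (act z -` B \<inter> space \<mu>) = emeasure \<mu> B"
    and equidistr: "\<And>c d g. a \<le> c \<Longrightarrow> c < d \<Longrightarrow> d \<le> b \<Longrightarrow> Cc (quot_top \<Gamma>) g \<Longrightarrow>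
       (\<lambda>k. (1 / (d - c)) * integral {c..d} (\<lambda>s. g (coset \<Gamma> (W k s)))) \<longlonglongrightarrow> integral\<^sup>L \<mu> g"
  shows "(\<lambda>k. (1 / (b - a)) * integral {a..b} (\<lambda>s. f (coset \<Gamma> (Z s ** W k s)))) \<longlonglongrightarrow> integral\<^sup>L \<mu> f"
proof (rule average_limit_by_freezing[OF ab, where h = "\<lambda>k u s. f (coset \<Gamma> (Z u ** W k s))"])
  have fc: "continuous_map (quot_top \<Gamma>) euclideanreal f" using f unfolding Cc_def by blast
  have ZS: "Z s \<in> SOQ" if "s \<in> {a..b}" for s using Z(2)[OF that] by (simp add: ZGA_def)
  show "continuous_on {a..b} (\<lambda>s. f (coset \<Gamma> (Z u ** W k s)))" if "u \<in> {a..b}" for k u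
    using W ZS[OF that] by (intro continuous_on_lift_comp[OF fc] matrix_mult_continuous_on continuous_on_const)
      (auto intro!: SOQ_mult)
  show "continuous_on {a..b} (\<lambda>s. f (coset \<Gamma> (Z s ** W k s)))" for k
    using Z W ZS by (intro continuous_on_lift_comp[OF fc] matrix_mult_continuous_on) (auto intro!: SOQ_mult)
  show "(\<lambda>k. (1 / (d - c)) * integral {c..d} (\<lambda>s. f (coset \<Gamma> (Z u ** W k s)))) \<longlonglongrightarrow> integral\<^sup>L \<mu> f"
    if "u \<in> {a..b}" "a \<le> c" "c < d" "d \<le> b" for u c d
  proof -
    have "(\<lambda>k. (1 / (d - c)) * integral {c..d} (\<lambda>s. f (act (Z u) (coset \<Gamma> (W k s)))))
        \<longlonglongrightarrow> integral\<^sup>L \<mu> (\<lambda>y. f (act (Z u) y))"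
      using that by (intro equidistr Cc_act[OF f ZS ne]) auto
    moreover have "integral\<^sup>L \<mu> (\<lambda>y. f (act (Z u) y)) = integral\<^sup>L \<mu> f"
      using that by (intro integral_act_invariant[OF B ZS _ fc] inv Z(2))
    ultimately show ?thesis by (simp add: act_coset)
  qed
  show "\<exists>\<delta>>0. \<forall>k u s. u \<in> {a..b} \<longrightarrow> s \<in> {a..b} \<longrightarrow> \<bar>s - u\<bar> < \<delta> \<longrightarrow>
      \<bar>f (coset \<Gamma> (Z s ** W k s)) - f (coset \<Gamma> (Z u ** W k s))\<bar> \<le> \<eta>" if "\<eta> > 0" for \<eta>
  proof -
    obtain R where R: "\<And>s. s \<in> {a..b} \<Longrightarrow> norm (Z s) \<le> R"
      using compact_imp_bounded[OF compact_continuous_image[OF Z(1) compact_Icc]] unfolding bounded_iff by blast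
    obtain \<epsilon> where \<epsilon>: "\<epsilon> > 0" "\<And>c z w. c \<in> SOQ \<Longrightarrow> z \<in> SOQ \<Longrightarrow> w \<in> SOQ \<Longrightarrow> norm z \<le> R \<Longrightarrow>
        norm (c - z) < \<epsilon> \<Longrightarrow> \<bar>f (coset \<Gamma> (c ** w)) - f (coset \<Gamma> (z ** w))\<bar> < \<eta>"
      using Cc_translation_uniform[OF L ne f \<open>\<eta> > 0\<close>] by metis
    obtain \<delta> where \<delta>: "\<delta> > 0" "\<And>s u. s \<in> {a..b} \<Longrightarrow> u \<in> {a..b} \<Longrightarrow> dist s u < \<delta> \<Longrightarrow> dist (Z s) (Z u) < \<epsilon>"
      using compact_uniformly_continuous[OF Z(1) compact_Icc] \<epsilon>(1) unfolding uniformly_continuous_on_def by metis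
    show ?thesis
      using \<delta> \<epsilon>(2) ZS W(2) R by (intro exI[of _ \<delta>]) (force simp: dist_norm less_imp_le)
  qed
qed

lemma conjugated_average_limit:
  fixes \<Gamma> :: "((real,'i::{finite,linorder}) vec,'i) vec set" and a b :: real
  assumes L: "lattice \<Gamma>" and ne: "fst_idx \<noteq> (lst_idx::'i)" and f: "Cc (quot_top \<Gamma>) f" and ab: "a < b"
    and uC: "uniform_limit {a..b} C Z sequentially"
    and C: "\<And>k. continuous_on {a..b} (C k)" "\<And>k s. s \<in> {a..b} \<Longrightarrow> C k s \<in> SOQ"
    and Z: "continuous_on {a..b} Z" "\<And>s. s \<in> {a..b} \<Longrightarrow> Z s \<in> ZGA"
    and W: "\<And>k. continuous_on {a..b} (W k)" "\<And>k s. s \<in> {a..b} \<Longrightarrow> W k s \<in> SOQ"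
    and B: "borel_measure_on (quot_top \<Gamma>) \<mu>"
    and inv: "\<And>z B. z \<in> ZGA \<Longrightarrow> B \<in> sets \<mu> \<Longrightarrow> emeasure \<mu> (act z -` B \<inter> space \<mu>) = emeasure \<mu> B"
    and equidistr: "\<And>c d g. a \<le> c \<Longrightarrow> c < d \<Longrightarrow> d \<le> b \<Longrightarrow> Cc (quot_top \<Gamma>) g \<Longrightarrow>
       (\<lambda>k. (1 / (d - c)) * integral {c..d} (\<lambda>s. g (coset \<Gamma> (W k s)))) \<longlonglongrightarrow> integral\<^sup>L \<mu> g"
  shows "(\<lambda>k. (1 / (b - a)) * integral {a..b} (\<lambda>s. f (coset \<Gamma> (C k s ** W k s)))) \<longlonglongrightarrow> integral\<^sup>L \<mu> f"
proof -
  have "\<And>s. s \<in> {a..b} \<Longrightarrow> Z s \<in> SOQ" using Z(2) by (simp add: ZGA_def)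
  then have "(\<lambda>k. (1 / (b - a)) * (integral {a..b} (\<lambda>s. f (coset \<Gamma> (C k s ** W k s)))
      - integral {a..b} (\<lambda>s. f (coset \<Gamma> (Z s ** W k s))))
      + (1 / (b - a)) * integral {a..b} (\<lambda>s. f (coset \<Gamma> (Z s ** W k s))))
      \<longlonglongrightarrow> (1 / (b - a)) * 0 + integral\<^sup>L \<mu> f"
    by (intro tendsto_add tendsto_mult_left integral_translation_replacement[OF L ne f uC Z(1) _ C W]
        twisted_average_limit[OF L ne f ab Z W B inv equidistr])
  then show ?thesis by (simp add: right_diff_distrib)
qed

lemma act_amat_ratio_factor:
  assumes ne: "fst_idx \<noteq> (lst_idx::'i::{finite,linorder})" and \<theta>: "\<theta> \<in> SOQ"
  shows "act (amat t) (act \<psi> (coset \<Gamma> m))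
    = coset \<Gamma> ((amat t ** (\<psi> ** Qinv \<theta>) ** amat (-t)) ** (amat t ** \<theta> ** (m :: ((real,'i) vec,'i) vec)))"
proof -
  have "(amat t ** (\<psi> ** Qinv \<theta>) ** amat (-t)) ** (amat t ** \<theta> ** m)
      = amat t ** \<psi> ** (Qinv \<theta> ** (amat (-t) ** amat t) ** \<theta>) ** m"
    by (simp add: matrix_mul_assoc)
  also have "\<dots> = amat t ** (\<psi> ** m)" using Qinv_left[OF ne \<theta>] by (simp add: amat_add amat_zero matrix_mul_assoc)
  finally show ?thesis by (simp add: act_coset)
qed

lemma translated_paths:
  assumes ne: "fst_idx \<noteq> (lst_idx::'i::{finite,linorder})"
    and \<theta>: "continuous_on S \<theta>" "\<theta> ` S \<subseteq> SOQ" and \<psi>: "continuous_on S \<psi>" "\<psi> ` S \<subseteq> SOQ"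
    and m: "(m :: ((real,'i) vec,'i) vec) \<in> SOQ"
  shows "continuous_on S (\<lambda>s. amat t ** \<theta> s ** m)" "\<And>s. s \<in> S \<Longrightarrow> amat t ** \<theta> s ** m \<in> SOQ"
    and "continuous_on S (\<lambda>s. amat t ** (\<psi> s ** Qinv (\<theta> s)) ** amat (-t))"
    and "\<And>s. s \<in> S \<Longrightarrow> amat t ** (\<psi> s ** Qinv (\<theta> s)) ** amat (-t) \<in> SOQ"
  using \<theta> \<psi> m amat_SOQ[OF ne]
  by (auto intro!: matrix_mult_continuous_on continuous_on_const SOQ_mult Qinv_SOQ[OF ne]
      continuous_on_compose2[OF linear_continuous_on[OF bounded_linear_Qinv] _ subset_UNIV])


theorem proposition5p1:
  fixes \<Gamma> :: "(((real, 'i::{finite,linorder}) vec, 'i) vec) set"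
    and \<theta> \<psi> :: "nat \<Rightarrow> real \<Rightarrow> ((real, 'i) vec, 'i) vec"
    and x :: "nat \<Rightarrow> (((real, 'i) vec, 'i) vec) set"
    and t :: "nat \<Rightarrow> real"
    and \<mu> :: "(((real, 'i) vec, 'i) vec) set measure"
    and a b :: real
  assumes "CARD('i) \<ge> 3"
    and "lattice \<Gamma>"
    and "a < b"
    and "\<And>k. continuous_on {a..b} (\<theta> k) \<and> \<theta> k ` {a..b} \<subseteq> SOQ"
    and "\<And>k. continuous_on {a..b} (\<psi> k) \<and> \<psi> k ` {a..b} \<subseteq> SOQ"
    and "uniformly_convergent_on {a..b} \<theta>"
    and "uniformly_convergent_on {a..b} \<psi>"
    and "\<And>k s. s \<in> {a..b} \<Longrightarrow> Pcoset (\<theta> k s) = Pcoset (\<psi> k s)"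
    and "\<And>k. x k \<in> Xspace \<Gamma>"
    and "filterlim t at_top sequentially"
    and "prob_space \<mu>"
    and "borel_measure_on (quot_top \<Gamma>) \<mu>"
    and "\<And>z B. z \<in> ZGA \<Longrightarrow> B \<in> sets \<mu> \<Longrightarrow>
           emeasure \<mu> (act z -` B \<inter> space \<mu>) = emeasure \<mu> B"
    and "\<And>J f. is_interval J \<Longrightarrow> J \<subseteq> {a..b} \<Longrightarrow> interior J \<noteq> {} \<Longrightarrow>
           Cc (quot_top \<Gamma>) f \<Longrightarrow>
           (\<lambda>k. (1 / measure lborel J) *
              integral J (\<lambda>s. f (act (amat (t k)) (act (\<theta> k s) (x k)))))
           \<longlonglongrightarrow> integral\<^sup>L \<mu> f"
  shows "\<forall>f. Cc (quot_top \<Gamma>) f \<longrightarrow>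
           (\<lambda>k. (1 / (b - a)) *
              integral {a..b} (\<lambda>s. f (act (amat (t k)) (act (\<psi> k s) (x k)))))
           \<longlonglongrightarrow> integral\<^sup>L \<mu> f"
proof (intro allI impI)
  fix f assume f: "Cc (quot_top \<Gamma>) f"
  have ne: "fst_idx \<noteq> (lst_idx::'i)" using assms(1) by (intro fst_idx_ne_lst_idx) simp
  have "\<forall>k. \<exists>g. g \<in> SOQ \<and> x k = coset \<Gamma> g" using assms(9) unfolding Xspace_def by blast
  then obtain m where m: "\<And>k. m k \<in> SOQ" "\<And>k. x k = coset \<Gamma> (m k)" by metis
  define C where "C = (\<lambda>k s. amat (t k) ** (\<psi> k s ** Qinv (\<theta> k s)) ** amat (- t k))"
  define W where "W = (\<lambda>k s. amat (t k) ** \<theta> k s ** m k)"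
  obtain Z where Z: "continuous_on {a..b} Z" "\<And>s. s \<in> {a..b} \<Longrightarrow> Z s \<in> ZGA"
    and uZ: "uniform_limit {a..b} C Z sequentially"
    using conjugated_ratio_limit[OF ne compact_Icc assms(4-8,10)] unfolding C_def by blast
  note paths = translated_paths[OF ne conjunct1[OF assms(4)] conjunct2[OF assms(4)]
      conjunct1[OF assms(5)] conjunct2[OF assms(5)] m(1)]
  have "(\<lambda>k. (1 / (b - a)) * integral {a..b} (\<lambda>s. f (coset \<Gamma> (C k s ** W k s)))) \<longlonglongrightarrow> integral\<^sup>L \<mu> f"
    unfolding C_def W_def
  proof (rule conjugated_average_limit[OF assms(2) ne f assms(3) uZ[unfolded C_def] paths(3,4) Z paths(1,2)
        assms(12,13)])
    show "(\<lambda>k. (1 / (d - c)) * integral {c..d} (\<lambda>s. g (coset \<Gamma> (amat (t k) ** \<theta> k s ** m k))))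
        \<longlonglongrightarrow> integral\<^sup>L \<mu> g" if "a \<le> c" "c < d" "d \<le> b" "Cc (quot_top \<Gamma>) g" for c d g
      using assms(14)[of "{c..d}" g] that by (simp add: m(2) act_coset matrix_mul_assoc)
  qed
  \<comment> \<open>a_t \<psi> x = C (a_t \<theta> x)\<close>
  moreover have "integral {a..b} (\<lambda>s. f (act (amat (t k)) (act (\<psi> k s) (x k))))
      = integral {a..b} (\<lambda>s. f (coset \<Gamma> (C k s ** W k s)))" for k
  proof (rule integral_cong)
    fix s assume "s \<in> {a..b}"
    then have "\<theta> k s \<in> SOQ" using assms(4) by blast
    then show "f (act (amat (t k)) (act (\<psi> k s) (x k))) = f (coset \<Gamma> (C k s ** W k s))"
      unfolding m(2) C_def W_def by (simp only: act_amat_ratio_factor[OF ne])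
  qed
  ultimately show "(\<lambda>k. (1 / (b - a)) * integral {a..b} (\<lambda>s. f (act (amat (t k)) (act (\<psi> k s) (x k)))))
      \<longlonglongrightarrow> integral\<^sup>L \<mu> f"
    by simp
qed

end
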